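(* Let $X$ be a $d$-uniform simplicial complex such that the down-up walk $U_{d-1}D_d$ has second largest eigenvalue $\lambda_2(U_{d-1}D_d)\le1-\frac{1}{Cd}$ for some $C>0$. Then for every $0\le k\le d$ and every $f:X(k)\to\mathbb{R}$, with $Z=f(X)$, \[\mathrm{Var}(f)\le(C+1)\sum_{i=1}^k\mathbb{E}\left[(Z-Z'_{(i)})_+^2\right].\]
   Context: $X$ is a $d$-uniform simplicial complex ($X(j)$ its faces of size $j$) with a distribution $\pi_d$ on $X(d)$ inducing $\pi_j$ on $X(j)$ by uniform subsampling; variance and expectations are with respect to $\pi_k$. The down-up walk $U_{d-1}D_d$ on $X(d)$ deletes a uniform vertex and adds back a face containing the remainder proportionally to $\pi_d$. Order vertices of each face arbitrarily; for $x=(x_1,\dots,x_k)\sim\pi_k$, $Z=f(x)$ and $Z'_{(i)}=f(x_1,\dots,z_i,\dots,x_k)$ where $z_i$ is drawn from the vertex distribution of the link of $x\setminus\{x_i\}$ (the link of $s$ is $\{t\setminus s:s\subseteq t\in X\}$ with the induced distribution); $(z)_+=\max\{z,0\}$. *)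

theory Defs
  imports "HOL-Analysis.Analysis" "Jordan_Normal_Form.Char_Poly" "HOL-Library.Multiset"
begin

text \<open>A d-uniform (pure) simplicial complex is given by its set of top faces Xd
  (all of size d) with a distribution p on Xd (positive weights summing to 1).
  X(j) consists of all j-subsets of top faces.\<close>

definition faces :: "'v set set \<Rightarrow> nat \<Rightarrow> 'v set set" where
  "faces Xd j = {t. \<exists>s\<in>Xd. t \<subseteq> s \<and> card t = j}"

text \<open>Induced distribution pi_j on X(j): draw s from pi_d, then a uniform j-subset of s.\<close>
definition pi_face :: "'v set set \<Rightarrow> ('v set \<Rightarrow> real) \<Rightarrow> nat \<Rightarrow> nat \<Rightarrow> 'v set \<Rightarrow> real" where
  "pi_face Xd p d j t = (\<Sum>s\<in>Xd. if t \<subseteq> s then p s else 0) / real (d choose j)"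

definition expec :: "'v set set \<Rightarrow> ('v set \<Rightarrow> real) \<Rightarrow> nat \<Rightarrow> nat \<Rightarrow> ('v set \<Rightarrow> real) \<Rightarrow> real" where
  "expec Xd p d k g = (\<Sum>x\<in>faces Xd k. pi_face Xd p d k x * g x)"

definition var :: "'v set set \<Rightarrow> ('v set \<Rightarrow> real) \<Rightarrow> nat \<Rightarrow> nat \<Rightarrow> ('v set \<Rightarrow> real) \<Rightarrow> real" where
  "var Xd p d k g = expec Xd p d k (\<lambda>x. (g x - expec Xd p d k g)\<^sup>2)"

text \<open>Vertex distribution of the link of a face s: the link has top faces t - s
  (t in Xd, s \<subseteq> t) with probability proportional to p t; a vertex is obtained
  by uniform subsampling of one vertex of the link's top face (which has d - |s| vertices).\<close>
definition link_vertex_dist :: "'v set set \<Rightarrow> ('v set \<Rightarrow> real) \<Rightarrow> nat \<Rightarrow> 'v set \<Rightarrow> 'v \<Rightarrow> real" where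
  "link_vertex_dist Xd p d s z =
     (if z \<in> s then 0 else
       (\<Sum>t\<in>Xd. if insert z s \<subseteq> t then p t else 0)
         / ((\<Sum>t\<in>Xd. if s \<subseteq> t then p t else 0) * real (d - card s)))"

text \<open>Transition probabilities of the down-up walk U_{d-1} D_d on X(d):
  delete a uniform vertex v of s, then move to a top face s' containing s - {v}
  with probability proportional to p s'.\<close>
definition down_up :: "'v set set \<Rightarrow> ('v set \<Rightarrow> real) \<Rightarrow> nat \<Rightarrow> 'v set \<Rightarrow> 'v set \<Rightarrow> real" where
  "down_up Xd p d s s' =
     (\<Sum>v\<in>s. (if s - {v} \<subseteq> s'
        then p s' / (\<Sum>s''\<in>Xd. if s - {v} \<subseteq> s'' then p s'' else 0) else 0)) / real d"

text \<open>Transition matrix with respect to a fixed enumeration of X(d)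
  (eigenvalues do not depend on the enumeration).\<close>
definition enum_faces :: "'v set set \<Rightarrow> 'v set list" where
  "enum_faces Xd = (SOME l. distinct l \<and> set l = Xd)"

definition down_up_mat :: "'v set set \<Rightarrow> ('v set \<Rightarrow> real) \<Rightarrow> nat \<Rightarrow> real mat" where
  "down_up_mat Xd p d = (let l = enum_faces Xd in
     mat (length l) (length l) (\<lambda>(i, j). down_up Xd p d (l ! i) (l ! j)))"

definition eigs_desc :: "real mat \<Rightarrow> real list" where
  "eigs_desc A = rev (sorted_list_of_multiset (proots (char_poly A)))"

definition lambda2_le :: "real mat \<Rightarrow> real \<Rightarrow> bool" where
  "lambda2_le A b \<longleftrightarrow> (\<forall>\<mu>\<in>set (tl (eigs_desc A)). \<mu> \<le> b)"

end

(*
  Split Var f into the expected variance of f over the k-subsets of a top face t and the variance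
  of the face average g t.  The first term is bounded face by face by a Poincare inequality for the
  Johnson scheme, proved by induction on k.  For the second, a minimizer of the Dirichlet form of
  the down-up walk on centered unit functions is an eigenfunction, and it is nonconstant, so its
  eigenvalue is at most lambda_2; this gives Var g <= C d times the Dirichlet form of g, which is at
  most C times the local squared differences of g, and those are bounded by the same link
  variances via Cauchy-Schwarz.  Finally, Z and Z'_(i) are conditionally i.i.d. given the
  (k-1)-face x - {x_i}, so E (Z - Z')_+^2 is half of E (Z - Z')^2, which is exactly the expected
  variance of f over the link of that face.
*)
theory Submission
  imports Defs
begin

unbundle no vec_syntax

definition k_subsets :: "'a set \<Rightarrow> nat \<Rightarrow> 'a set set" where
  "k_subsets t k = {x. x \<subseteq> t \<and> card x = k}"

lemma mem_k_subsets [simp]: "x \<in> k_subsets t k \<longleftrightarrow> x \<subseteq> t \<and> card x = k"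
  unfolding k_subsets_def by simp

lemma finite_k_subsets [simp]: "finite t \<Longrightarrow> finite (k_subsets t k)"
  unfolding k_subsets_def by (rule finite_subset[of _ "Pow t"]) auto

lemma card_k_subsets: "finite t \<Longrightarrow> card (k_subsets t k) = card t choose k"
  unfolding k_subsets_def by (rule n_subsets)

lemma k_subsets_0: "finite t \<Longrightarrow> k_subsets t 0 = {{}}"
  unfolding k_subsets_def by (auto dest: finite_subset)

lemma sum_remove_point:
  assumes t: "finite t" "t \<noteq> {}"
  shows "(\<Sum>v\<in>t. G (t - {v})) = (\<Sum>u\<in>k_subsets t (card t - 1). G u)"
proof (rule sum.reindex_bij_witness[where i = "\<lambda>u. the_elem (t - u)" and j = "\<lambda>v. t - {v}"])
  fix u assume u: "u \<in> k_subsets t (card t - 1)"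
  have "card t > 0" using t by (simp add: card_gt_0_iff)
  moreover have "finite u" using u t finite_subset by auto
  ultimately have "card (t - u) = 1"
    using u by (simp add: card_Diff_subset)
  then obtain v where "t - u = {v}" by (auto simp: card_Suc_eq)
  with \<open>u \<in> k_subsets t (card t - 1)\<close> show "the_elem (t - u) \<in> t" "t - {the_elem (t - u)} = u"
    by auto
qed (use t in \<open>auto simp: Diff_Diff_Int\<close>)

lemma sum_k_subsets_flags:
  assumes T: "finite T" and K: "K \<ge> 1"
  shows "(\<Sum>x\<in>k_subsets T K. \<Sum>v\<in>x. G x (x - {v}))
       = (\<Sum>s\<in>k_subsets T (K - 1). \<Sum>w\<in>T - s. G (insert w s) s)"
proof -
  have fin: "finite x" if "x \<in> k_subsets T K" for x
    using that T finite_subset by auto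
  have insert_mem: "insert w s \<in> k_subsets T K" if "s \<in> k_subsets T (K - 1)" "w \<in> T - s" for s w
  proof -
    have "finite s" using that T finite_subset by auto
    then show ?thesis using that K by (simp add: card_insert_disjoint)
  qed
  have "(\<Sum>x\<in>k_subsets T K. \<Sum>v\<in>x. G x (x - {v})) = (\<Sum>(x, v)\<in>(SIGMA x:k_subsets T K. x). G x (x - {v}))"
    using T fin by (subst sum.Sigma) auto
  also have "\<dots> = (\<Sum>(s, w)\<in>Sigma (k_subsets T (K - 1)) (\<lambda>s. T - s). G (insert w s) s)"
    apply (rule sum.reindex_bij_witness[where i = "\<lambda>(s, w). (insert w s, w)" and j = "\<lambda>(x, v). (x - {v}, v)"])
    subgoal for a by (cases a) (auto simp: insert_absorb)
    subgoal for a using fin by (cases a) (auto simp: card_Diff_singleton)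
    subgoal for b by (cases b) auto
    subgoal for b using insert_mem by (cases b) auto
    subgoal for a by (cases a) (auto simp: insert_absorb)
    done
  also have "\<dots> = (\<Sum>s\<in>k_subsets T (K - 1). \<Sum>w\<in>T - s. G (insert w s) s)"
    using T by (subst sum.Sigma) auto
  finally show ?thesis .
qed

lemma sum_sq_dev_eq:
  fixes a :: "'a \<Rightarrow> real"
  assumes "finite A"
  shows "(\<Sum>w\<in>A. (a w - c)\<^sup>2)
       = (\<Sum>w\<in>A. (a w - sum a A / card A)\<^sup>2) + card A * (sum a A / card A - c)\<^sup>2"
proof (cases "A = {}")
  case False
  define m where "m = sum a A / card A"
  have centered: "(\<Sum>w\<in>A. a w - m) = 0"
    using assms False unfolding m_def by (simp add: sum_subtractf)
  have "(\<Sum>w\<in>A. (a w - c)\<^sup>2) = (\<Sum>w\<in>A. (a w - m)\<^sup>2 + 2 * (m - c) * (a w - m) + (m - c)\<^sup>2)"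
    by (intro sum.cong) (auto simp: power2_eq_square algebra_simps)
  also have "\<dots> = (\<Sum>w\<in>A. (a w - m)\<^sup>2) + 2 * (m - c) * (\<Sum>w\<in>A. a w - m) + card A * (m - c)\<^sup>2"
    by (simp add: sum.distrib sum_distrib_left)
  finally show ?thesis using centered unfolding m_def by simp
qed simp

lemma sum_k_subsets_split:
  assumes t: "finite t" and v: "v \<in> t" and k: "k \<ge> 1"
  shows "(\<Sum>x\<in>k_subsets t k. f x)
       = (\<Sum>x\<in>k_subsets (t - {v}) k. f x) + (\<Sum>s\<in>k_subsets (t - {v}) (k - 1). f (insert v s))"
proof -
  have split: "k_subsets t k = k_subsets (t - {v}) k \<union> insert v ` k_subsets (t - {v}) (k - 1)"
  proof (intro equalityI subsetI)
    fix x assume x: "x \<in> k_subsets t k"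
    show "x \<in> k_subsets (t - {v}) k \<union> insert v ` k_subsets (t - {v}) (k - 1)"
    proof (cases "v \<in> x")
      case True
      then have "x - {v} \<in> k_subsets (t - {v}) (k - 1)" "x = insert v (x - {v})"
        using x t by (auto simp: card_Diff_singleton finite_subset)
      then show ?thesis by blast
    qed (use x in auto)
  next
    fix x assume "x \<in> k_subsets (t - {v}) k \<union> insert v ` k_subsets (t - {v}) (k - 1)"
    then consider "x \<in> k_subsets (t - {v}) k"
      | s where "s \<in> k_subsets (t - {v}) (k - 1)" "x = insert v s" by blast
    then show "x \<in> k_subsets t k"
    proof cases
      case 2
      then have "finite s" "v \<notin> s" using t finite_subset by auto
      then show ?thesis using 2 v k by auto
    qed auto
  qed
  have "inj_on (insert v) (k_subsets (t - {v}) (k - 1))"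
    by (rule inj_onI) (metis Diff_insert_absorb DiffD2 insertI1 mem_k_subsets subset_iff)
  then show ?thesis
    unfolding split using t by (subst sum.union_disjoint) (auto simp: sum.reindex)
qed

lemma sum_offdiag_swap:
  assumes "finite S"
  shows "(\<Sum>u\<in>S. \<Sum>w\<in>S - {u}. G u w) = (\<Sum>w\<in>S. \<Sum>u\<in>S - {w}. G u w)"
proof -
  have "(\<Sum>u\<in>S. \<Sum>w\<in>S - {u}. G u w) = (\<Sum>u\<in>S. \<Sum>w\<in>{w\<in>S. u \<noteq> w}. G u w)"
    by (intro sum.cong) auto
  also have "\<dots> = (\<Sum>w\<in>S. \<Sum>u\<in>{u\<in>S. u \<noteq> w}. G u w)"
    using assms by (rule sum.swap_restrict[OF _ assms])
  also have "\<dots> = (\<Sum>w\<in>S. \<Sum>u\<in>S - {w}. G u w)"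
    by (intro sum.cong) auto
  finally show ?thesis .
qed

lemma sum_points_k_subsets_swap:
  assumes "finite t"
  shows "(\<Sum>v\<in>t. \<Sum>s\<in>k_subsets (t - {v}) j. \<Phi> v s) = (\<Sum>s\<in>k_subsets t j. \<Sum>w\<in>t - s. \<Phi> w s)"
proof -
  have "(\<Sum>v\<in>t. \<Sum>s\<in>k_subsets (t - {v}) j. \<Phi> v s) = (\<Sum>v\<in>t. \<Sum>s\<in>{s\<in>k_subsets t j. v \<notin> s}. \<Phi> v s)"
    by (intro sum.cong refl) auto
  also have "\<dots> = (\<Sum>s\<in>k_subsets t j. \<Sum>v\<in>{v\<in>t. v \<notin> s}. \<Phi> v s)"
    using assms by (intro sum.swap_restrict) auto
  also have "\<dots> = (\<Sum>s\<in>k_subsets t j. \<Sum>w\<in>t - s. \<Phi> w s)"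
    by (intro sum.cong refl) auto
  finally show ?thesis .
qed

lemma sum_sq_le_card_sum_sq:
  fixes y :: "'a \<Rightarrow> real"
  shows "(\<Sum>s\<in>S. y s)\<^sup>2 \<le> card S * (\<Sum>s\<in>S. (y s)\<^sup>2)"
  using Cauchy_Schwarz_ineq_sum[of y "\<lambda>_. 1" S] by (simp add: mult.commute)

lemma sum_pos_part_sq_pairs:
  fixes a F :: "'a \<Rightarrow> real"
  shows "(\<Sum>w\<in>A. \<Sum>z\<in>A. a w * a z * (max (F w - F z) 0)\<^sup>2)
       = (\<Sum>w\<in>A. \<Sum>z\<in>A. a w * a z * (F w - F z)\<^sup>2) / 2"
proof -
  have pos_neg: "(max x 0)\<^sup>2 + (max (- x) 0)\<^sup>2 = x\<^sup>2" for x :: real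
    by (cases "x \<ge> 0") (auto simp: max_def)
  have "(\<Sum>w\<in>A. \<Sum>z\<in>A. a w * a z * (max (F w - F z) 0)\<^sup>2)
      = (\<Sum>w\<in>A. \<Sum>z\<in>A. a w * a z * (max (- (F w - F z)) 0)\<^sup>2)"
    by (subst sum.swap) (simp add: mult.commute)
  then have "2 * (\<Sum>w\<in>A. \<Sum>z\<in>A. a w * a z * (max (F w - F z) 0)\<^sup>2)
      = (\<Sum>w\<in>A. \<Sum>z\<in>A. a w * a z * ((max (F w - F z) 0)\<^sup>2 + (max (- (F w - F z)) 0)\<^sup>2))"
    by (simp add: distrib_left sum.distrib)
  then show ?thesis by (simp only: pos_neg)
qed

lemma sum_sq_diff_pairs:
  fixes a F :: "'a \<Rightarrow> real"
  assumes N: "sum a A \<noteq> 0"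
  shows "(\<Sum>w\<in>A. \<Sum>z\<in>A. a w * a z * (F w - F z)\<^sup>2)
       = 2 * sum a A * (\<Sum>w\<in>A. a w * (F w - (\<Sum>z\<in>A. a z * F z) / sum a A)\<^sup>2)"
proof -
  define N P L where "N = sum a A" and "P = (\<Sum>w\<in>A. a w * (F w)\<^sup>2)" and "L = (\<Sum>w\<in>A. a w * F w)"
  have "(\<Sum>w\<in>A. \<Sum>z\<in>A. a w * a z * (F w - F z)\<^sup>2)
      = (\<Sum>w\<in>A. \<Sum>z\<in>A. a z * (a w * (F w)\<^sup>2) + a w * (a z * (F z)\<^sup>2) - 2 * ((a w * F w) * (a z * F z)))"
    by (intro sum.cong) (auto simp: power2_eq_square algebra_simps)
  also have "\<dots> = (\<Sum>w\<in>A. \<Sum>z\<in>A. a z * (a w * (F w)\<^sup>2)) + (\<Sum>w\<in>A. \<Sum>z\<in>A. a w * (a z * (F z)\<^sup>2))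
      - 2 * (\<Sum>w\<in>A. \<Sum>z\<in>A. (a w * F w) * (a z * F z))"
    by (simp add: sum.distrib sum_subtractf sum_distrib_left)
  also have "(\<Sum>w\<in>A. \<Sum>z\<in>A. a z * (a w * (F w)\<^sup>2)) = N * P"
    unfolding N_def P_def by (simp add: sum_distrib_left sum_distrib_right)
  also have "(\<Sum>w\<in>A. \<Sum>z\<in>A. a w * (a z * (F z)\<^sup>2)) = N * P"
    unfolding N_def P_def by (simp add: sum_distrib_left[symmetric] sum_distrib_right[symmetric])
  also have "(\<Sum>w\<in>A. \<Sum>z\<in>A. (a w * F w) * (a z * F z)) = L\<^sup>2"
    unfolding L_def by (simp add: sum_distrib_left[symmetric] sum_distrib_right[symmetric] power2_eq_square)
  also have "N * P + N * P - 2 * L\<^sup>2 = 2 * N * (P - 2 * (L / N) * L + (L / N)\<^sup>2 * N)"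
    using N unfolding N_def by (simp add: field_simps power2_eq_square)
  also have "P - 2 * (L / N) * L + (L / N)\<^sup>2 * N
      = (\<Sum>w\<in>A. a w * (F w)\<^sup>2 - 2 * (L / N) * (a w * F w) + (L / N)\<^sup>2 * a w)"
    unfolding P_def L_def N_def by (simp add: sum.distrib sum_subtractf sum_distrib_left)
  also have "\<dots> = (\<Sum>w\<in>A. a w * (F w - L / N)\<^sup>2)"
    by (intro sum.cong) (auto simp: power2_eq_square algebra_simps)
  finally show ?thesis unfolding N_def L_def .
qed

lemma weighted_pos_part_sq_eq_variance:
  fixes a F :: "'a \<Rightarrow> real"
  assumes N: "sum a A \<noteq> 0"
  shows "(\<Sum>w\<in>A. a w * (\<Sum>z\<in>A. a z / sum a A * (max (F w - F z) 0)\<^sup>2))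
       = (\<Sum>w\<in>A. a w * (F w - (\<Sum>z\<in>A. a z / sum a A * F z))\<^sup>2)"
proof -
  have "(\<Sum>w\<in>A. a w * (\<Sum>z\<in>A. a z / sum a A * (max (F w - F z) 0)\<^sup>2))
      = (\<Sum>w\<in>A. \<Sum>z\<in>A. a w * a z * (max (F w - F z) 0)\<^sup>2) / sum a A"
    by (simp add: sum_distrib_left sum_divide_distrib mult.assoc)
  also have "\<dots> = (\<Sum>w\<in>A. a w * (F w - (\<Sum>z\<in>A. a z * F z) / sum a A)\<^sup>2)"
    using N by (simp add: sum_pos_part_sq_pairs sum_sq_diff_pairs)
  finally show ?thesis by (simp add: sum_divide_distrib)
qed

section \<open>A Poincare inequality for the Johnson scheme\<close>

definition k_mean :: "'a set \<Rightarrow> nat \<Rightarrow> ('a set \<Rightarrow> real) \<Rightarrow> real" where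
  "k_mean T k f = sum f (k_subsets T k) / card (k_subsets T k)"

definition up_mean :: "'a set \<Rightarrow> 'a set \<Rightarrow> ('a set \<Rightarrow> real) \<Rightarrow> real" where
  "up_mean T s f = (\<Sum>w\<in>T - s. f (insert w s)) / card (T - s)"

definition up_energy :: "'a set \<Rightarrow> nat \<Rightarrow> ('a set \<Rightarrow> real) \<Rightarrow> real" where
  "up_energy T k f = (\<Sum>s\<in>k_subsets T (k - 1). \<Sum>w\<in>T - s. (f (insert w s) - up_mean T s f)\<^sup>2)"

lemma up_energy_nonneg: "up_energy T k f \<ge> 0"
  unfolding up_energy_def by (intro sum_nonneg) auto

lemma card_Diff_k_subset: "finite T \<Longrightarrow> s \<in> k_subsets T k \<Longrightarrow> card (T - s) = card T - k"
  by (auto simp: card_Diff_subset finite_subset)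

lemma sum_k_subsets_Suc_eq_up_sums:
  assumes T: "finite T"
  shows "real (Suc k) * (\<Sum>x\<in>k_subsets T (Suc k). g x) = (\<Sum>s\<in>k_subsets T k. \<Sum>w\<in>T - s. g (insert w s))"
proof -
  have "real (Suc k) * (\<Sum>x\<in>k_subsets T (Suc k). g x) = (\<Sum>x\<in>k_subsets T (Suc k). \<Sum>v\<in>x. g x)"
    by (simp add: sum_distrib_left)
  also have "\<dots> = (\<Sum>s\<in>k_subsets T k. \<Sum>w\<in>T - s. g (insert w s))"
    using sum_k_subsets_flags[OF T, of "Suc k" "\<lambda>x _. g x"] by simp
  finally show ?thesis .
qed

lemma sum_sq_dev_k_subsets_Suc:
  assumes T: "finite T"
  shows "real (Suc k) * (\<Sum>x\<in>k_subsets T (Suc k). (f x - c)\<^sup>2)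
       = up_energy T (Suc k) f + real (card T - k) * (\<Sum>s\<in>k_subsets T k. (up_mean T s f - c)\<^sup>2)"
proof -
  have "real (Suc k) * (\<Sum>x\<in>k_subsets T (Suc k). (f x - c)\<^sup>2)
      = (\<Sum>s\<in>k_subsets T k. \<Sum>w\<in>T - s. (f (insert w s) - c)\<^sup>2)"
    by (rule sum_k_subsets_Suc_eq_up_sums[OF T])
  also have "\<dots> = (\<Sum>s\<in>k_subsets T k. (\<Sum>w\<in>T - s. (f (insert w s) - up_mean T s f)\<^sup>2)
                     + real (card T - k) * (up_mean T s f - c)\<^sup>2)"
  proof (rule sum.cong[OF refl])
    fix s assume "s \<in> k_subsets T k"
    then have "card (T - s) = card T - k" using T by (rule card_Diff_k_subset[rotated])
    then show "(\<Sum>w\<in>T - s. (f (insert w s) - c)\<^sup>2)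
        = (\<Sum>w\<in>T - s. (f (insert w s) - up_mean T s f)\<^sup>2) + real (card T - k) * (up_mean T s f - c)\<^sup>2"
      using sum_sq_dev_eq[of "T - s" "\<lambda>w. f (insert w s)" c] T unfolding up_mean_def by simp
  qed
  finally show ?thesis unfolding up_energy_def by (simp add: sum.distrib sum_distrib_left)
qed

lemma k_mean_up_mean:
  assumes T: "finite T" and k: "k < card T"
  shows "k_mean T k (\<lambda>s. up_mean T s f) = k_mean T (Suc k) f"
proof -
  define n where "n = card T"
  have "(\<Sum>s\<in>k_subsets T k. up_mean T s f) = (\<Sum>s\<in>k_subsets T k. \<Sum>w\<in>T - s. f (insert w s)) / (n - k)"
    unfolding up_mean_def sum_divide_distrib n_def
    by (intro sum.cong refl) (simp add: card_Diff_k_subset[OF T])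
  also have "\<dots> = real (Suc k) * sum f (k_subsets T (Suc k)) / (n - k)"
    using sum_k_subsets_Suc_eq_up_sums[OF T, of k f] by simp
  finally have sum_up: "(\<Sum>s\<in>k_subsets T k. up_mean T s f) = real (Suc k) * sum f (k_subsets T (Suc k)) / (n - k)" .
  have "Suc k * (n choose Suc k) = (n - k) * (n choose k)"
    by (simp only: binomial_absorption binomial_absorb_comp)
  then have binom: "real (Suc k) * (n choose Suc k) = real (n - k) * (n choose k)"
    by (metis of_nat_mult)
  have "k_mean T k (\<lambda>s. up_mean T s f)
      = real (Suc k) * sum f (k_subsets T (Suc k)) / (real (n - k) * real (n choose k))"
    unfolding k_mean_def sum_up card_k_subsets[OF T] n_def[symmetric] by simp
  also have "real (n - k) * real (n choose k) = real (Suc k) * real (n choose Suc k)"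
    using binom by simp
  finally show ?thesis
    unfolding k_mean_def card_k_subsets[OF T] n_def[symmetric] by simp
qed

lemma sum_sq_dev_row_means_le:
  fixes h :: "'a \<Rightarrow> 'a \<Rightarrow> real"
  assumes S: "finite S" and sym: "\<And>u w. h u w = h w u"
    and H: "\<And>u. u \<in> S \<Longrightarrow> (\<Sum>w\<in>S - {u}. h u w) = (real (card S) - 1) * H u"
  shows "(real (card S) + 1) * (\<Sum>u\<in>S. (H u - sum H S / card S)\<^sup>2)
       \<le> (\<Sum>u\<in>S. \<Sum>w\<in>S - {u}. (h u w - H u)\<^sup>2)"
proof -
  define m where "m = real (card S)"
  define M where "M = sum H S / m"
  define a where "a u = H u - M" for u
  have sum_a: "(\<Sum>u\<in>S. a u) = 0"
    using S unfolding a_def M_def m_def by (cases "S = {}") (simp_all add: sum_subtractf)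
  have sum_offdiag: "(\<Sum>u\<in>S. \<Sum>w\<in>S - {u}. g w) = (m - 1) * sum g S" for g :: "'a \<Rightarrow> real"
    using S unfolding m_def by (simp add: sum_diff1 sum_subtractf algebra_simps)
  have sum_H_a: "(\<Sum>u\<in>S. H u * a u) = (\<Sum>u\<in>S. (a u)\<^sup>2)"
  proof -
    have "(\<Sum>u\<in>S. H u * a u) = (\<Sum>u\<in>S. (a u)\<^sup>2 + M * a u)"
      by (intro sum.cong) (auto simp: a_def power2_eq_square algebra_simps)
    then show ?thesis using sum_a by (simp add: sum.distrib sum_distrib_left[symmetric])
  qed
  have "(\<Sum>u\<in>S. \<Sum>w\<in>S - {u}. h u w * a w) = (\<Sum>w\<in>S. \<Sum>u\<in>S - {w}. h w u * a w)"
    by (subst sum_offdiag_swap[OF S]) (simp add: sym)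
  also have "\<dots> = (\<Sum>w\<in>S. a w * (\<Sum>u\<in>S - {w}. h w u))"
    by (simp add: sum_distrib_left mult.commute)
  also have "\<dots> = (\<Sum>w\<in>S. a w * ((m - 1) * H w))"
    by (intro sum.cong refl) (simp add: H m_def)
  also have "\<dots> = (m - 1) * (\<Sum>w\<in>S. H w * a w)"
    by (simp add: sum_distrib_left algebra_simps)
  finally have cross_h: "(\<Sum>u\<in>S. \<Sum>w\<in>S - {u}. h u w * a w) = (m - 1) * (\<Sum>w\<in>S. (a w)\<^sup>2)"
    unfolding sum_H_a .
  have cross_H: "(\<Sum>u\<in>S. \<Sum>w\<in>S - {u}. H u * a w) = - (\<Sum>u\<in>S. (a u)\<^sup>2)"
    using S sum_a sum_H_a by (simp add: sum_distrib_left[symmetric] sum_diff1 sum_negf)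
  have "0 \<le> (\<Sum>u\<in>S. \<Sum>w\<in>S - {u}. (h u w - H u - a w)\<^sup>2)"
    by (intro sum_nonneg) auto
  also have "\<dots> = (\<Sum>u\<in>S. \<Sum>w\<in>S - {u}. (h u w - H u)\<^sup>2)
      - 2 * ((\<Sum>u\<in>S. \<Sum>w\<in>S - {u}. h u w * a w) - (\<Sum>u\<in>S. \<Sum>w\<in>S - {u}. H u * a w))
      + (\<Sum>u\<in>S. \<Sum>w\<in>S - {u}. (a w)\<^sup>2)"
    by (simp add: power2_eq_square algebra_simps sum.distrib sum_subtractf sum_distrib_left)
  finally show ?thesis
    unfolding cross_h cross_H sum_offdiag by (simp add: a_def M_def m_def algebra_simps)
qed

lemma up_mean_sq_dev_le:
  assumes T: "finite T" and r: "r \<in> k_subsets T (k - 1)"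
  shows "real (card T - k) * (\<Sum>u\<in>T - r. (up_mean T (insert u r) f - up_mean T r (\<lambda>s. up_mean T s f))\<^sup>2)
       \<le> (\<Sum>u\<in>T - r. \<Sum>w\<in>T - insert u r. (f (insert w (insert u r)) - up_mean T (insert u r) f)\<^sup>2)"
proof -
  define F where "F s = up_mean T s f" for s
  define S where "S = T - r"
  define h where "h u w = f (insert w (insert u r))" for u w
  have S_fin: "finite S" using T by (simp add: S_def)
  have T_minus: "T - insert u r = S - {u}" for u
    unfolding S_def by auto
  have F_row: "(\<Sum>w\<in>S - {u}. h u w) = (real (card S) - 1) * F (insert u r)" if u: "u \<in> S" for u
  proof (cases "S - {u} = {}")
    case False
    have "card (S - {u}) = card S - 1" using u S_fin by (simp add: card_Diff_singleton)
    moreover have "card S \<ge> 1" using u S_fin by (metis One_nat_def Suc_leI card_gt_0_iff empty_iff)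
    moreover have "card (S - {u}) \<noteq> 0" using False S_fin by simp
    ultimately show ?thesis unfolding F_def up_mean_def T_minus h_def by (simp add: of_nat_diff)
  next
    case True
    then have "S = {u}" using u by auto
    then show ?thesis by simp
  qed
  have "real (card T - k) \<le> real (card S) + 1"
    using card_Diff_k_subset[OF T r] unfolding S_def by simp
  then have "real (card T - k) * (\<Sum>u\<in>S. (F (insert u r) - up_mean T r F)\<^sup>2)
      \<le> (real (card S) + 1) * (\<Sum>u\<in>S. (F (insert u r) - (\<Sum>u\<in>S. F (insert u r)) / card S)\<^sup>2)"
    unfolding up_mean_def S_def by (intro mult_right_mono) (auto intro: sum_nonneg)
  also have "\<dots> \<le> (\<Sum>u\<in>S. \<Sum>w\<in>S - {u}. (h u w - F (insert u r))\<^sup>2)"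
    by (rule sum_sq_dev_row_means_le[OF S_fin _ F_row]) (simp add: h_def insert_commute)
  finally show ?thesis unfolding S_def F_def h_def T_minus .
qed

lemma up_energy_up_mean_le:
  assumes T: "finite T" and k: "k \<ge> 1"
  shows "real (card T - k) * up_energy T k (\<lambda>s. up_mean T s f) \<le> real k * up_energy T (Suc k) f"
proof -
  define G where "G s = (\<Sum>w\<in>T - s. (f (insert w s) - up_mean T s f)\<^sup>2)" for s
  have "real (card T - k) * up_energy T k (\<lambda>s. up_mean T s f)
      = (\<Sum>r\<in>k_subsets T (k - 1). real (card T - k)
           * (\<Sum>u\<in>T - r. (up_mean T (insert u r) f - up_mean T r (\<lambda>s. up_mean T s f))\<^sup>2))"
    unfolding up_energy_def by (simp add: sum_distrib_left)
  also have "\<dots> \<le> (\<Sum>r\<in>k_subsets T (k - 1). \<Sum>u\<in>T - r. G (insert u r))"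
    unfolding G_def by (intro sum_mono up_mean_sq_dev_le[OF T])
  also have "\<dots> = (\<Sum>s\<in>k_subsets T k. \<Sum>v\<in>s. G s)"
    using sum_k_subsets_flags[OF T k, of "\<lambda>s _. G s"] by simp
  also have "\<dots> = (\<Sum>s\<in>k_subsets T k. real k * G s)"
    by (intro sum.cong) auto
  also have "\<dots> = real k * up_energy T (Suc k) f"
    unfolding up_energy_def G_def by (simp add: sum_distrib_left)
  finally show ?thesis .
qed

lemma k_subsets_variance_le_up_energy:
  assumes T: "finite T"
  shows "k \<le> card T \<Longrightarrow> (\<Sum>x\<in>k_subsets T k. (f x - k_mean T k f)\<^sup>2) \<le> up_energy T k f"
proof (induction k arbitrary: f)
  case 0
  then show ?case using T by (simp add: k_mean_def k_subsets_0 up_energy_nonneg)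
next
  case (Suc k)
  define F where "F s = up_mean T s f" for s
  define g where "g = k_mean T (Suc k) f"
  have mean: "k_mean T k F = g"
    unfolding F_def g_def by (rule k_mean_up_mean[OF T]) (use Suc.prems in simp)
  have "real (card T - k) * (\<Sum>s\<in>k_subsets T k. (F s - g)\<^sup>2) \<le> real k * up_energy T (Suc k) f"
  proof (cases "k = 0")
    case True
    then show ?thesis using mean T by (simp add: k_subsets_0 k_mean_def up_energy_nonneg)
  next
    case False
    have "(\<Sum>s\<in>k_subsets T k. (F s - g)\<^sup>2) \<le> up_energy T k F"
      using Suc.IH[of F] Suc.prems mean by simp
    then have "real (card T - k) * (\<Sum>s\<in>k_subsets T k. (F s - g)\<^sup>2) \<le> real (card T - k) * up_energy T k F"
      by (rule mult_left_mono) simp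
    also have "\<dots> \<le> real k * up_energy T (Suc k) f"
      using up_energy_up_mean_le[OF T] False unfolding F_def by simp
    finally show ?thesis .
  qed
  then have "real (Suc k) * (\<Sum>x\<in>k_subsets T (Suc k). (f x - g)\<^sup>2) \<le> real (Suc k) * up_energy T (Suc k) f"
    unfolding sum_sq_dev_k_subsets_Suc[OF T] F_def by (simp add: algebra_simps)
  then show ?case unfolding g_def by simp
qed

lemma up_energy_le:
  assumes "finite T"
  shows "up_energy T k f \<le> (\<Sum>s\<in>k_subsets T (k - 1). \<Sum>w\<in>T - s. (f (insert w s) - c s)\<^sup>2)"
  unfolding up_energy_def
proof (rule sum_mono)
  fix s assume "s \<in> k_subsets T (k - 1)"
  show "(\<Sum>w\<in>T - s. (f (insert w s) - up_mean T s f)\<^sup>2) \<le> (\<Sum>w\<in>T - s. (f (insert w s) - c s)\<^sup>2)"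
    using sum_sq_dev_eq[of "T - s" "\<lambda>w. f (insert w s)" "c s"] assms unfolding up_mean_def by simp
qed

section \<open>The second eigenvalue of a stochastic matrix\<close>

lemma sorted_desc_mem_tl:
  fixes L :: "'a :: linorder list"
  assumes "sorted_wrt (\<ge>) L" "x \<in> set L" "y \<in> set L" "x < y"
  shows "x \<in> set (tl L)"
proof (cases L)
  case (Cons a L')
  show ?thesis
  proof (rule ccontr)
    assume "x \<notin> set (tl L)"
    then have "x = a" using assms Cons by auto
    moreover have "y \<le> a" using assms Cons by auto
    ultimately show False using assms by auto
  qed
qed (use assms in simp)

lemma count_mset_ge_2_mem_tl:
  assumes "count (mset L) x \<ge> 2"
  shows "x \<in> set (tl L)"
proof (cases L)
  case (Cons a L')
  show ?thesis
  proof (rule ccontr)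
    assume "x \<notin> set (tl L)"
    then have "x \<notin> set L'" using Cons by simp
    have "count (mset L) x = count_list L x" by (simp add: count_mset)
    also have "\<dots> \<le> 1" using Cons \<open>x \<notin> set L'\<close> by (simp add: count_list_0_iff)
    finally have "count (mset L) x \<le> 1" .
    then show False using assms by simp
  qed
qed (use assms in simp)

lemma sorted_eigs_desc: "sorted_wrt (\<ge>) (eigs_desc A)"
  unfolding eigs_desc_def sorted_wrt_rev
  using sorted_sorted_list_of_multiset[of "proots (char_poly A)"]
  by (metis (no_types, lifting) sorted_wrt_mono_rel)

lemma mset_eigs_desc: "mset (eigs_desc A) = proots (char_poly A)"
  unfolding eigs_desc_def by simp

lemma set_eigs_desc:
  assumes "A \<in> carrier_mat n n"
  shows "set (eigs_desc A) = {x. poly (char_poly A) x = 0}"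
proof -
  have "char_poly A \<noteq> 0"
    using degree_monic_char_poly[OF assms] by auto
  then show ?thesis by (metis mset_eigs_desc set_mset_mset set_count_proots)
qed

lemma lambda2_le_lower_root:
  assumes A: "A \<in> carrier_mat n n" and gap: "lambda2_le A b"
    and roots: "poly (char_poly A) x = 0" "poly (char_poly A) y = 0" and "x < y"
  shows "x \<le> b"
proof -
  have mem: "x \<in> set (eigs_desc A)" "y \<in> set (eigs_desc A)"
    using roots unfolding set_eigs_desc[OF A] by simp_all
  have "x \<in> set (tl (eigs_desc A))"
    by (rule sorted_desc_mem_tl[OF sorted_eigs_desc mem \<open>x < y\<close>])
  then show ?thesis using gap unfolding lambda2_le_def by blast
qed

lemma lambda2_le_multiple_root:
  assumes A: "A \<in> carrier_mat n n" and gap: "lambda2_le A b" and "order x (char_poly A) \<ge> 2"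
  shows "x \<le> b"
proof -
  have "char_poly A \<noteq> 0"
    using degree_monic_char_poly[OF A] by auto
  then have "count (mset (eigs_desc A)) x \<ge> 2"
    using assms(3) by (simp add: mset_eigs_desc)
  then have "x \<in> set (tl (eigs_desc A))"
    by (rule count_mset_ge_2_mem_tl)
  then show ?thesis
    using gap unfolding lambda2_le_def by blast
qed

lemma eigenvector_root_char_poly:
  fixes A :: "'a :: field mat"
  assumes A: "A \<in> carrier_mat n n" and v: "v \<in> carrier_vec n" "v \<noteq> 0\<^sub>v n" and ev: "A *\<^sub>v v = e \<cdot>\<^sub>v v"
  shows "poly (char_poly A) e = 0"
proof -
  have "eigenvector A v e" using A v ev unfolding eigenvector_def by auto
  then show ?thesis using eigenvalue_root_char_poly[OF A] eigenvalue_def by blast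
qed

lemma index_mult_mat_vec_sum:
  assumes "A \<in> carrier_mat n n" "v \<in> carrier_vec n" "i < n"
  shows "(A *\<^sub>v v) $ i = (\<Sum>j\<in>{0..<n}. A $$ (i, j) * v $ j)"
  using assms by (auto simp: scalar_prod_def)

lemma sum_insert_index:
  assumes "i < Suc m"
  shows "(\<Sum>j\<in>{0..<m}. F (insert_index i j)) = (\<Sum>k\<in>{0..<Suc m} - {i}. F k)"
proof -
  have "(\<Sum>j\<in>{0..<m}. F (insert_index i j)) = sum F (insert_index i ` {0..<m})"
    by (simp add: sum.reindex[OF insert_index_inj_on])
  then show ?thesis unfolding insert_index_image[OF assms] .
qed

text \<open>If g is fixed by a stochastic matrix A, so is g minus the constant g i; that vector vanishes at i,
  so dropping its i-th entry gives a fixed vector of the principal minor of A at i.\<close>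

lemma stochastic_principal_minor_fixed_vec:
  fixes A :: "real mat" and g :: "real vec"
  assumes A: "A \<in> carrier_mat (Suc m) (Suc m)"
    and rows: "\<And>i. i < Suc m \<Longrightarrow> (\<Sum>j\<in>{0..<Suc m}. A $$ (i, j)) = 1"
    and g: "g \<in> carrier_vec (Suc m)" and fixed: "A *\<^sub>v g = g" and i: "i < Suc m"
  shows "mat_delete A i i *\<^sub>v vec m (\<lambda>j. g $ insert_index i j - g $ i) = vec m (\<lambda>j. g $ insert_index i j - g $ i)"
proof -
  define w where "w = vec m (\<lambda>j. g $ insert_index i j - g $ i)"
  have minor: "mat_delete A i i \<in> carrier_mat m m"
    using mat_delete_carrier[OF A] by simp
  have "mat_delete A i i *\<^sub>v w = w"
  proof (rule eq_vecI)
    fix j assume "j < dim_vec w"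
    then have j: "j < m" by (simp add: w_def)
    define r where "r = insert_index i j"
    have r: "r < Suc m" using j unfolding r_def insert_index_def by auto
    have "(mat_delete A i i *\<^sub>v w) $ j = (\<Sum>l\<in>{0..<m}. mat_delete A i i $$ (j, l) * w $ l)"
      using index_mult_mat_vec_sum[OF minor _ j, of w] by (simp add: w_def)
    also have "\<dots> = (\<Sum>l\<in>{0..<m}. (\<lambda>k. A $$ (r, k) * (g $ k - g $ i)) (insert_index i l))"
      using j A unfolding w_def mat_delete_def insert_index_def r_def by (intro sum.cong) auto
    also have "\<dots> = (\<Sum>k\<in>{0..<Suc m} - {i}. A $$ (r, k) * (g $ k - g $ i))"
      by (rule sum_insert_index[OF i])
    also have "\<dots> = (\<Sum>k\<in>{0..<Suc m}. A $$ (r, k) * (g $ k - g $ i))"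
      using i by (intro sum.mono_neutral_left) auto
    also have "\<dots> = (\<Sum>k\<in>{0..<Suc m}. A $$ (r, k) * g $ k) - g $ i * (\<Sum>k\<in>{0..<Suc m}. A $$ (r, k))"
      by (simp add: algebra_simps sum_subtractf sum_distrib_left)
    also have "(\<Sum>k\<in>{0..<Suc m}. A $$ (r, k) * g $ k) = g $ r"
      using index_mult_mat_vec_sum[OF A g r] fixed by simp
    also have "(\<Sum>k\<in>{0..<Suc m}. A $$ (r, k)) = 1"
      by (rule rows[OF r])
    finally show "(mat_delete A i i *\<^sub>v w) $ j = w $ j"
      using j unfolding w_def r_def by simp
  qed (use A in \<open>simp add: w_def\<close>)
  then show ?thesis unfolding w_def .
qed

lemma stochastic_principal_minor_root_one:
  fixes A :: "real mat" and g :: "real vec"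
  assumes A: "A \<in> carrier_mat (Suc m) (Suc m)"
    and rows: "\<And>i. i < Suc m \<Longrightarrow> (\<Sum>j\<in>{0..<Suc m}. A $$ (i, j)) = 1"
    and g: "g \<in> carrier_vec (Suc m)" and fixed: "A *\<^sub>v g = g"
    and i: "i < Suc m" and k: "k < Suc m" "g $ k \<noteq> g $ i"
  shows "poly (char_poly (mat_delete A i i)) 1 = 0"
proof -
  define w where "w = vec m (\<lambda>j. g $ insert_index i j - g $ i)"
  have minor: "mat_delete A i i \<in> carrier_mat m m"
    using mat_delete_carrier[OF A] by simp
  have "k \<noteq> i" using k by auto
  then have "delete_index i k < m" "w $ delete_index i k \<noteq> 0"
    using i k unfolding w_def by (auto simp: delete_index_def insert_delete_index)
  then have "w \<noteq> 0\<^sub>v m" by auto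
  moreover have "w \<in> carrier_vec m" by (simp add: w_def)
  moreover have "mat_delete A i i *\<^sub>v w = 1 \<cdot>\<^sub>v w"
    using stochastic_principal_minor_fixed_vec[OF A rows g fixed i] unfolding w_def by simp
  ultimately show ?thesis
    using eigenvector_root_char_poly[OF minor] by blast
qed

lemma stochastic_nonconstant_fixed_multiple_root:
  fixes A :: "real mat" and g :: "real vec"
  assumes A: "A \<in> carrier_mat n n"
    and rows: "\<And>i. i < n \<Longrightarrow> (\<Sum>j\<in>{0..<n}. A $$ (i, j)) = 1"
    and g: "g \<in> carrier_vec n" and fixed: "A *\<^sub>v g = g"
    and nc: "i0 < n" "j0 < n" "g $ i0 \<noteq> g $ j0"
  shows "order 1 (char_poly A) \<ge> 2"
proof -
  obtain m where n: "n = Suc m" using nc by (cases n) auto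
  have g0: "g \<noteq> 0\<^sub>v n" using nc by auto
  have c0: "char_poly A \<noteq> 0" and deg: "degree (char_poly A) = n"
    using degree_monic_char_poly[OF A] by auto
  have root: "poly (char_poly A) 1 = 0"
    using eigenvector_root_char_poly[OF A g g0] fixed by simp
  have "poly (char_poly (mat_delete A i i)) 1 = 0" if i: "i < n" for i
  proof -
    obtain k where "k < n" "g $ k \<noteq> g $ i" using nc by (cases "g $ i0 = g $ i") auto
    then show ?thesis
      using stochastic_principal_minor_root_one[of A m g i k] A rows g fixed i unfolding n by blast
  qed
  then have "poly (pderiv (char_poly A)) 1 = 0"
    unfolding pderiv_char_poly[OF A] poly_sum by simp
  moreover have "pderiv (char_poly A) \<noteq> 0"
    using deg n by (simp add: pderiv_eq_0_iff)
  ultimately have "order 1 (pderiv (char_poly A)) \<noteq> 0"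
    using order_root by blast
  then show ?thesis
    using order_pderiv[OF c0 root] by simp
qed

text \<open>1 is an eigenvalue; an eigenvalue e < 1 is then not the top of the spectrum, and e = 1 with a
  nonconstant eigenvector is a multiple root.\<close>

lemma lambda2_le_nonconstant_eigenvalue_le:
  fixes A :: "real mat" and g :: "real vec"
  assumes A: "A \<in> carrier_mat n n"
    and rows: "\<And>i. i < n \<Longrightarrow> (\<Sum>j\<in>{0..<n}. A $$ (i, j)) = 1"
    and g: "g \<in> carrier_vec n" and ev: "A *\<^sub>v g = e \<cdot>\<^sub>v g"
    and nc: "i0 < n" "j0 < n" "g $ i0 \<noteq> g $ j0"
    and gap: "lambda2_le A b" and b: "b < 1"
  shows "e \<le> b"
proof -
  define one where "one = vec n (\<lambda>_. 1 :: real)"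
  have "one \<in> carrier_vec n" unfolding one_def by simp
  moreover have "one \<noteq> 0\<^sub>v n"
    using nc unfolding one_def by (metis index_vec index_zero_vec(1) zero_neq_one)
  moreover have "A *\<^sub>v one = 1 \<cdot>\<^sub>v one"
    by (rule eq_vecI) (use A rows in \<open>auto simp: one_def scalar_prod_def\<close>)
  ultimately have root1: "poly (char_poly A) 1 = 0"
    by (rule eigenvector_root_char_poly[OF A])
  have "g \<noteq> 0\<^sub>v n" using nc by auto
  then have roote: "poly (char_poly A) e = 0"
    using eigenvector_root_char_poly[OF A g _ ev] by simp
  consider "e < 1" | "e = 1" | "1 < e" by linarith
  then show ?thesis
  proof cases
    case 1
    then show ?thesis using lambda2_le_lower_root[OF A gap roote root1] by simp
  next
    case 2
    then have "order 1 (char_poly A) \<ge> 2"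
      using stochastic_nonconstant_fixed_multiple_root[OF A rows g _ nc] ev by simp
    then show ?thesis using lambda2_le_multiple_root[OF A gap] b by fastforce
  next
    case 3
    then show ?thesis using lambda2_le_lower_root[OF A gap root1 roote] b by simp
  qed
qed

section \<open>The down-up walk and its Dirichlet form\<close>

lemma faces_eq_Union_k_subsets: "faces Xd k = (\<Union>t\<in>Xd. k_subsets t k)"
  unfolding faces_def k_subsets_def by auto

lemma sum_top_k_subsets_swap:
  assumes "finite Xd" "\<And>t. t \<in> Xd \<Longrightarrow> finite t"
  shows "(\<Sum>t\<in>Xd. \<Sum>x\<in>k_subsets t k. X x t) = (\<Sum>x\<in>faces Xd k. \<Sum>t\<in>Xd. if x \<subseteq> t then X x t else 0)"
proof -
  have fin: "finite (faces Xd k)"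
    unfolding faces_eq_Union_k_subsets using assms by auto
  have "(\<Sum>x\<in>k_subsets t k. X x t) = (\<Sum>x\<in>faces Xd k. if x \<subseteq> t then X x t else 0)" if t: "t \<in> Xd" for t
  proof -
    have "k_subsets t k = {x \<in> faces Xd k. x \<subseteq> t}"
      using t unfolding faces_def k_subsets_def by blast
    then show ?thesis using fin by (simp add: sum.inter_filter)
  qed
  then have "(\<Sum>t\<in>Xd. \<Sum>x\<in>k_subsets t k. X x t) = (\<Sum>t\<in>Xd. \<Sum>x\<in>faces Xd k. if x \<subseteq> t then X x t else 0)"
    by (rule sum.cong[OF refl])
  also have "\<dots> = (\<Sum>x\<in>faces Xd k. \<Sum>t\<in>Xd. if x \<subseteq> t then X x t else 0)"
    by (rule sum.swap)
  finally show ?thesis .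
qed

lemma quadratic_nonneg_linear_coeff_zero:
  fixes \<beta> \<gamma> :: real
  assumes "\<And>\<tau>. 2 * \<tau> * \<beta> + \<tau>\<^sup>2 * \<gamma> \<ge> 0"
  shows "\<beta> = 0"
proof (rule ccontr)
  assume "\<beta> \<noteq> 0"
  define A where "A = \<bar>\<gamma>\<bar> + 1"
  have A: "A > 0" "\<gamma> \<le> A" unfolding A_def by auto
  define \<tau> where "\<tau> = - \<beta> / A"
  have "2 * \<tau> * \<beta> + \<tau>\<^sup>2 * \<gamma> \<le> 2 * \<tau> * \<beta> + \<tau>\<^sup>2 * A"
    using A by (intro add_left_mono mult_left_mono) auto
  also have "\<dots> = - \<beta>\<^sup>2 / A"
    unfolding \<tau>_def using A by (simp add: field_simps power2_eq_square)
  also have "\<dots> < 0" using \<open>\<beta> \<noteq> 0\<close> A by simp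
  finally show False using assms[of \<tau>] by simp
qed

lemma sum_nth_distinct:
  assumes "distinct l"
  shows "(\<Sum>j\<in>{0..<length l}. F (l ! j)) = (\<Sum>s\<in>set l. F s)"
proof -
  have "inj_on (nth l) {0..<length l}" using assms by (simp add: inj_on_nth)
  moreover have "nth l ` {0..<length l} = set l" by (auto simp: set_conv_nth)
  ultimately show ?thesis by (metis sum.reindex_cong)
qed

locale weighted_complex =
  fixes Xd :: "'v set set" and p :: "'v set \<Rightarrow> real" and d :: nat
  assumes finite_top: "finite Xd"
    and top_faces: "\<And>s. s \<in> Xd \<Longrightarrow> finite s \<and> card s = d" and d_pos: "d \<ge> 1"
    and p_pos: "\<And>s. s \<in> Xd \<Longrightarrow> p s > 0" and p_sum: "(\<Sum>s\<in>Xd. p s) = 1"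
begin

definition weight :: "'v set \<Rightarrow> real" where
  "weight u = (\<Sum>t\<in>Xd. if u \<subseteq> t then p t else 0)"

definition cond_mean :: "('v set \<Rightarrow> real) \<Rightarrow> 'v set \<Rightarrow> real" where
  "cond_mean h u = (\<Sum>t\<in>Xd. if u \<subseteq> t then p t * h t else 0) / weight u"

definition pinner :: "('v set \<Rightarrow> real) \<Rightarrow> ('v set \<Rightarrow> real) \<Rightarrow> real" where
  "pinner a b = (\<Sum>t\<in>Xd. p t * a t * b t)"

definition down_up_apply :: "('v set \<Rightarrow> real) \<Rightarrow> 'v set \<Rightarrow> real" where
  "down_up_apply h s = (\<Sum>s'\<in>Xd. down_up Xd p d s s' * h s')"

definition dirichlet :: "('v set \<Rightarrow> real) \<Rightarrow> real" where
  "dirichlet h = pinner h h - pinner h (down_up_apply h)"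

lemma p_nonneg: "t \<in> Xd \<Longrightarrow> p t \<ge> 0"
  using p_pos less_imp_le by blast

lemma sum_top_k_subsets:
  "(\<Sum>t\<in>Xd. \<Sum>x\<in>k_subsets t k. X x t) = (\<Sum>x\<in>faces Xd k. \<Sum>t\<in>Xd. if x \<subseteq> t then X x t else 0)"
  using finite_top top_faces by (intro sum_top_k_subsets_swap) auto

lemma weight_nonneg: "weight u \<ge> 0"
  unfolding weight_def using p_nonneg by (intro sum_nonneg) auto

lemma weight_pos: "s \<in> faces Xd k \<Longrightarrow> weight s > 0"
proof -
  assume "s \<in> faces Xd k"
  then obtain t where t: "t \<in> Xd" "s \<subseteq> t" unfolding faces_def by auto
  have "p t \<le> weight s" unfolding weight_def
    using t finite_top p_nonneg member_le_sum[of t Xd "\<lambda>t. if s \<subseteq> t then p t else 0"] by auto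
  then show ?thesis using p_pos[OF t(1)] by simp
qed

lemma sum_top_weighted: "s \<in> faces Xd k \<Longrightarrow> (\<Sum>t\<in>Xd. if s \<subseteq> t then p t * h t else 0) = weight s * cond_mean h s"
  unfolding cond_mean_def using weight_pos[of s k] by simp

lemma sum_top_facets:
  "(\<Sum>t\<in>Xd. \<Sum>v\<in>t. G t (t - {v})) = (\<Sum>u\<in>faces Xd (d - 1). \<Sum>t\<in>Xd. if u \<subseteq> t then G t u else (0::real))"
proof -
  have "(\<Sum>v\<in>t. G t (t - {v})) = (\<Sum>u\<in>k_subsets t (d - 1). G t u)" if "t \<in> Xd" for t
    using top_faces[OF that] d_pos sum_remove_point[of t "G t"] by fastforce
  then show ?thesis
    using sum_top_k_subsets[where k = "d - 1" and X = "\<lambda>u t. G t u"] by simp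
qed

lemma down_up_apply_eq:
  assumes s: "s \<in> Xd"
  shows "down_up_apply h s = (\<Sum>v\<in>s. cond_mean h (s - {v})) / d"
proof -
  have "down_up_apply h s
      = (\<Sum>s'\<in>Xd. (\<Sum>v\<in>s. if s - {v} \<subseteq> s' then p s' / weight (s - {v}) else 0) * h s' * (1 / d))"
    unfolding down_up_apply_def down_up_def weight_def by (intro sum.cong) auto
  also have "\<dots> = (\<Sum>s'\<in>Xd. (\<Sum>v\<in>s. if s - {v} \<subseteq> s' then p s' / weight (s - {v}) else 0) * h s') / d"
    by (simp only: sum_distrib_right[symmetric]) simp
  also have "(\<Sum>s'\<in>Xd. (\<Sum>v\<in>s. if s - {v} \<subseteq> s' then p s' / weight (s - {v}) else 0) * h s')
      = (\<Sum>v\<in>s. \<Sum>s'\<in>Xd. (if s - {v} \<subseteq> s' then p s' * h s' else 0) / weight (s - {v}))"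
    by (subst sum.swap) (auto simp: sum_distrib_right intro!: sum.cong)
  also have "\<dots> = (\<Sum>v\<in>s. cond_mean h (s - {v}))"
    unfolding cond_mean_def by (simp add: sum_divide_distrib)
  finally show ?thesis .
qed

lemma down_up_apply_const: "s \<in> Xd \<Longrightarrow> down_up_apply (\<lambda>_. 1) s = 1"
proof -
  assume s: "s \<in> Xd"
  have "cond_mean (\<lambda>_. 1) (s - {v}) = 1" if "v \<in> s" for v
  proof -
    have "s - {v} \<in> faces Xd (d - 1)"
      using s that top_faces[OF s] unfolding faces_def by (auto simp: card_Diff_singleton)
    then have "weight (s - {v}) > 0" by (rule weight_pos)
    moreover have "(\<Sum>t\<in>Xd. if s - {v} \<subseteq> t then p t * (\<lambda>_. 1) t else 0) = weight (s - {v})"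
      unfolding weight_def by (intro sum.cong) auto
    ultimately show ?thesis unfolding cond_mean_def by simp
  qed
  then show ?thesis using top_faces[OF s] d_pos by (simp add: down_up_apply_eq[OF s])
qed

lemma pinner_down_up_apply:
  "pinner a (down_up_apply b) = (\<Sum>u\<in>faces Xd (d - 1). weight u * cond_mean a u * cond_mean b u) / d"
proof -
  have "pinner a (down_up_apply b) = (\<Sum>t\<in>Xd. \<Sum>v\<in>t. p t * a t * cond_mean b (t - {v})) / d"
    unfolding pinner_def by (simp add: down_up_apply_eq sum_divide_distrib sum_distrib_left)
  also have "(\<Sum>t\<in>Xd. \<Sum>v\<in>t. p t * a t * cond_mean b (t - {v}))
      = (\<Sum>u\<in>faces Xd (d - 1). \<Sum>t\<in>Xd. if u \<subseteq> t then p t * a t * cond_mean b u else 0)"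
    by (rule sum_top_facets)
  also have "\<dots> = (\<Sum>u\<in>faces Xd (d - 1). (\<Sum>t\<in>Xd. if u \<subseteq> t then p t * a t else 0) * cond_mean b u)"
    by (auto simp: sum_distrib_right intro!: sum.cong)
  also have "\<dots> = (\<Sum>u\<in>faces Xd (d - 1). weight u * cond_mean a u * cond_mean b u)"
    by (intro sum.cong) (auto simp: sum_top_weighted)
  finally show ?thesis .
qed

lemma pinner_down_up_apply_commute: "pinner a (down_up_apply b) = pinner b (down_up_apply a)"
  unfolding pinner_down_up_apply by (simp add: mult.commute mult.left_commute)

lemma pinner_commute: "pinner a b = pinner b a"
  unfolding pinner_def by (simp add: mult.commute mult.left_commute)

lemma sum_sq_facets_eq:
  "(\<Sum>t\<in>Xd. \<Sum>v\<in>t. p t * (h t - c (t - {v}))\<^sup>2)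
     = d * dirichlet h + (\<Sum>u\<in>faces Xd (d - 1). weight u * (cond_mean h u - c u)\<^sup>2)"
proof -
  have local: "(\<Sum>t\<in>Xd. if u \<subseteq> t then p t * (h t - c u)\<^sup>2 else 0)
      = (\<Sum>t\<in>Xd. if u \<subseteq> t then p t * (h t)\<^sup>2 else 0) - weight u * (cond_mean h u)\<^sup>2
        + weight u * (cond_mean h u - c u)\<^sup>2"
    if u: "u \<in> faces Xd (d - 1)" for u
  proof -
    have "(\<Sum>t\<in>Xd. if u \<subseteq> t then p t * (h t - c u)\<^sup>2 else 0)
      = (\<Sum>t\<in>Xd. if u \<subseteq> t then p t * (h t)\<^sup>2 else 0)
        - 2 * c u * (\<Sum>t\<in>Xd. if u \<subseteq> t then p t * h t else 0) + (c u)\<^sup>2 * weight u"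
      unfolding weight_def sum_distrib_left sum_subtractf[symmetric] sum.distrib[symmetric]
      by (intro sum.cong) (auto simp: power2_eq_square algebra_simps)
    then show ?thesis
      unfolding sum_top_weighted[OF u] by (simp add: power2_eq_square algebra_simps)
  qed
  have squares: "(\<Sum>t\<in>Xd. \<Sum>v\<in>t. p t * (h t)\<^sup>2) = d * pinner h h"
    unfolding pinner_def sum_distrib_left using top_faces
    by (intro sum.cong) (auto simp: power2_eq_square)
  have means: "(\<Sum>u\<in>faces Xd (d - 1). weight u * (cond_mean h u)\<^sup>2) = d * pinner h (down_up_apply h)"
    unfolding pinner_down_up_apply using d_pos by (simp add: power2_eq_square mult.assoc)
  have "(\<Sum>t\<in>Xd. \<Sum>v\<in>t. p t * (h t - c (t - {v}))\<^sup>2)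
      = (\<Sum>u\<in>faces Xd (d - 1). \<Sum>t\<in>Xd. if u \<subseteq> t then p t * (h t - c u)\<^sup>2 else 0)"
    by (rule sum_top_facets)
  moreover have "(\<Sum>t\<in>Xd. \<Sum>v\<in>t. p t * (h t)\<^sup>2)
      = (\<Sum>u\<in>faces Xd (d - 1). \<Sum>t\<in>Xd. if u \<subseteq> t then p t * (h t)\<^sup>2 else 0)"
    by (rule sum_top_facets)
  ultimately show ?thesis
    using squares means unfolding dirichlet_def
    by (simp add: local sum.distrib sum_subtractf right_diff_distrib)
qed

lemma dirichlet_le_sum_sq_facets:
  "d * dirichlet h \<le> (\<Sum>t\<in>Xd. \<Sum>v\<in>t. p t * (h t - c (t - {v}))\<^sup>2)"
  unfolding sum_sq_facets_eq using weight_nonneg by (simp add: sum_nonneg)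

lemma dirichlet_nonneg: "dirichlet h \<ge> 0"
proof -
  have "d * dirichlet h = (\<Sum>t\<in>Xd. \<Sum>v\<in>t. p t * (h t - cond_mean h (t - {v}))\<^sup>2)"
    unfolding sum_sq_facets_eq by simp
  also have "\<dots> \<ge> 0"
    by (intro sum_nonneg mult_nonneg_nonneg p_nonneg) auto
  finally show ?thesis using d_pos by (simp add: zero_le_mult_iff)
qed

lemma pinner_cong:
  "(\<And>t. t \<in> Xd \<Longrightarrow> a t = a' t) \<Longrightarrow> (\<And>t. t \<in> Xd \<Longrightarrow> b t = b' t) \<Longrightarrow> pinner a b = pinner a' b'"
  unfolding pinner_def by simp

lemma down_up_apply_cong: "(\<And>t. t \<in> Xd \<Longrightarrow> f t = g t) \<Longrightarrow> down_up_apply f s = down_up_apply g s"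
  unfolding down_up_apply_def by simp

lemma dirichlet_cong: "(\<And>t. t \<in> Xd \<Longrightarrow> f t = g t) \<Longrightarrow> dirichlet f = dirichlet g"
  unfolding dirichlet_def by (intro arg_cong2[where f = minus] pinner_cong down_up_apply_cong) auto

lemma pinner_linear_left: "pinner (\<lambda>t. a * f t + b * g t) h = a * pinner f h + b * pinner g h"
  unfolding pinner_def by (simp add: sum.distrib sum_distrib_left algebra_simps)

lemma pinner_linear_right: "pinner h (\<lambda>t. a * f t + b * g t) = a * pinner h f + b * pinner h g"
  unfolding pinner_def by (simp add: sum.distrib sum_distrib_left algebra_simps)

lemma down_up_apply_linear:
  "down_up_apply (\<lambda>t. a * f t + b * g t) s = a * down_up_apply f s + b * down_up_apply g s"
  unfolding down_up_apply_def by (simp add: sum.distrib sum_distrib_left algebra_simps)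

lemma pinner_self_nonneg: "pinner h h \<ge> 0"
  unfolding pinner_def by (intro sum_nonneg) (simp add: mult.assoc p_nonneg)

lemma pinner_self_eq_0:
  assumes "pinner h h = 0" "t \<in> Xd"
  shows "h t = 0"
proof -
  have "\<forall>x\<in>Xd. p x * h x * h x = 0"
    using assms(1) finite_top unfolding pinner_def
    by (subst (asm) sum_nonneg_eq_0_iff) (auto simp: mult.assoc p_nonneg)
  then show ?thesis using assms(2) p_pos[OF assms(2)] by auto
qed

lemma pinner_scale: "pinner (\<lambda>t. c * a t) (\<lambda>t. c' * b t) = c * c' * pinner a b"
  unfolding pinner_def by (simp add: sum_distrib_left algebra_simps)

lemma dirichlet_scale: "dirichlet (\<lambda>t. c * h t) = c\<^sup>2 * dirichlet h"
  unfolding dirichlet_def pinner_def down_up_apply_linear[of c h 0 h, simplified]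
  by (simp add: sum_distrib_left algebra_simps power2_eq_square sum_subtractf)

lemma dirichlet_add:
  "dirichlet (\<lambda>t. g t + \<tau> * h t)
     = dirichlet g + 2 * \<tau> * (pinner g h - pinner g (down_up_apply h)) + \<tau>\<^sup>2 * dirichlet h"
proof -
  have "down_up_apply (\<lambda>t. g t + \<tau> * h t) s = down_up_apply g s + \<tau> * down_up_apply h s" for s
    using down_up_apply_linear[of 1 g \<tau> h s] by simp
  then have "dirichlet (\<lambda>t. g t + \<tau> * h t)
      = pinner g g + \<tau> * pinner g h + \<tau> * pinner h g + \<tau>\<^sup>2 * pinner h h
        - (pinner g (down_up_apply g) + \<tau> * pinner g (down_up_apply h)
           + \<tau> * pinner h (down_up_apply g) + \<tau>\<^sup>2 * pinner h (down_up_apply h))"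
    unfolding dirichlet_def pinner_def
    by (simp add: sum.distrib sum_distrib_left algebra_simps power2_eq_square)
  then show ?thesis
    unfolding dirichlet_def
    using pinner_commute[of h g] pinner_down_up_apply_commute[of h g] by (simp add: algebra_simps)
qed

text \<open>For a minimizer g of the Rayleigh quotient the quadratic
  \<tau> \<mapsto> dirichlet (g + \<tau> h) - dirichlet g * pinner (g + \<tau> h) (g + \<tau> h) is nonnegative,
  so its linear coefficient vanishes.\<close>

lemma dirichlet_first_variation:
  assumes g1: "pinner g (\<lambda>_. 1) = 0" and g2: "pinner g g = 1"
    and minimal: "\<And>h. pinner h (\<lambda>_. 1) = 0 \<Longrightarrow> dirichlet g * pinner h h \<le> dirichlet h"
    and h: "pinner h (\<lambda>_. 1) = 0"
  shows "pinner g (down_up_apply h) = (1 - dirichlet g) * pinner g h"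
proof -
  define \<mu> where "\<mu> = dirichlet g"
  have "2 * \<tau> * (pinner g h - pinner g (down_up_apply h) - \<mu> * pinner g h)
      + \<tau>\<^sup>2 * (dirichlet h - \<mu> * pinner h h) \<ge> 0" for \<tau>
  proof -
    have lin_left: "pinner (\<lambda>t. g t + \<tau> * h t) a = pinner g a + \<tau> * pinner h a" for a
      using pinner_linear_left[of 1 g \<tau> h a] by simp
    have lin_right: "pinner a (\<lambda>t. g t + \<tau> * h t) = pinner a g + \<tau> * pinner a h" for a
      using pinner_linear_right[of a 1 g \<tau> h] by simp
    have "pinner (\<lambda>t. g t + \<tau> * h t) (\<lambda>_. 1) = 0"
      using g1 h by (simp add: lin_left)
    then have "\<mu> * pinner (\<lambda>t. g t + \<tau> * h t) (\<lambda>t. g t + \<tau> * h t) \<le> dirichlet (\<lambda>t. g t + \<tau> * h t)"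
      unfolding \<mu>_def by (rule minimal)
    moreover have "pinner (\<lambda>t. g t + \<tau> * h t) (\<lambda>t. g t + \<tau> * h t) = 1 + 2 * \<tau> * pinner g h + \<tau>\<^sup>2 * pinner h h"
      using g2 pinner_commute[of h g] by (simp add: lin_left lin_right power2_eq_square algebra_simps)
    ultimately show ?thesis
      unfolding dirichlet_add \<mu>_def by (simp add: algebra_simps)
  qed
  then have "pinner g h - pinner g (down_up_apply h) - \<mu> * pinner g h = 0"
    by (rule quadratic_nonneg_linear_coeff_zero)
  then show ?thesis unfolding \<mu>_def by (simp add: algebra_simps)
qed

lemma dirichlet_minimizer_eigenfunction:
  assumes g1: "pinner g (\<lambda>_. 1) = 0" and g2: "pinner g g = 1"
    and minimal: "\<And>h. pinner h (\<lambda>_. 1) = 0 \<Longrightarrow> dirichlet g * pinner h h \<le> dirichlet h"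
    and s: "s \<in> Xd"
  shows "down_up_apply g s = (1 - dirichlet g) * g s"
proof -
  define r where "r t = (1 - dirichlet g) * g t + (- 1) * down_up_apply g t" for t
  have r_inner: "pinner r a = (1 - dirichlet g) * pinner g a - pinner a (down_up_apply g)" for a
    unfolding r_def pinner_linear_left using pinner_commute[of "down_up_apply g" a] by simp
  have "pinner (\<lambda>_. 1) (down_up_apply g) = pinner g (down_up_apply (\<lambda>_. 1))"
    by (rule pinner_down_up_apply_commute)
  also have "\<dots> = pinner g (\<lambda>_. 1)"
    by (rule pinner_cong) (auto simp: down_up_apply_const)
  finally have "pinner r (\<lambda>_. 1) = 0"
    unfolding r_inner using g1 by simp
  then have "pinner g (down_up_apply r) = (1 - dirichlet g) * pinner g r"
    using dirichlet_first_variation[OF g1 g2 minimal] by blast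
  then have "pinner r r = 0"
    unfolding r_inner[of r] pinner_down_up_apply_commute[of r g] by simp
  then have "r s = 0" using s by (rule pinner_self_eq_0)
  then show ?thesis unfolding r_def by simp
qed

text \<open>The box is implied by pinner h h = 1 (see abs_le_sqrt_pinner); together with PiE it makes this
  set compact in the product topology, and every centered unit function agrees on Xd with a member.\<close>

definition unit_centered :: "('v set \<Rightarrow> real) set" where
  "unit_centered = {h \<in> PiE Xd (\<lambda>s. {- sqrt (1 / p s) .. sqrt (1 / p s)}).
     pinner h (\<lambda>_. 1) = 0 \<and> pinner h h = 1}"

lemma abs_le_sqrt_pinner:
  assumes t: "t \<in> Xd"
  shows "\<bar>h t\<bar> \<le> sqrt (pinner h h / p t)"
proof -
  have "p t * h t * h t \<le> pinner h h"
    unfolding pinner_def using finite_top t by (intro member_le_sum) (auto simp: mult.assoc p_nonneg)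
  then have "(h t)\<^sup>2 \<le> pinner h h / p t"
    using p_pos[OF t] by (simp add: field_simps power2_eq_square)
  then show ?thesis
    using real_sqrt_le_mono by fastforce
qed

lemma restrict_mem_unit_centered:
  assumes "pinner h (\<lambda>_. 1) = 0" "pinner h h = 1"
  shows "restrict h Xd \<in> unit_centered"
proof -
  have "pinner (restrict h Xd) a = pinner h a" "pinner (restrict h Xd) (restrict h Xd) = pinner h h" for a
    by (auto intro: pinner_cong)
  moreover have "h s \<in> {- sqrt (1 / p s) .. sqrt (1 / p s)}" if "s \<in> Xd" for s
    using abs_le_sqrt_pinner[OF that, of h] assms(2) by (simp add: abs_le_iff)
  ultimately show ?thesis
    unfolding unit_centered_def using assms by auto
qed

lemma compact_dirichlet_unit_centered: "compact (dirichlet ` unit_centered)"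
proof -
  define X where "X = product_topology (\<lambda>_::'v set. euclideanreal) Xd"
  define B where "B s = {- sqrt (1 / p s) .. sqrt (1 / p s)}" for s
  have eval: "continuous_map X euclideanreal (\<lambda>h. h t)" if "t \<in> Xd" for t
    unfolding X_def using continuous_map_product_projection[of t Xd "\<lambda>_. euclideanreal"] that by simp
  have cont: "continuous_map X euclideanreal (\<lambda>h. pinner h (\<lambda>_. 1))"
    "continuous_map X euclideanreal (\<lambda>h. pinner h h)" "continuous_map X euclideanreal dirichlet"
    unfolding dirichlet_def[abs_def] pinner_def down_up_apply_def
    by (intro continuous_map_diff continuous_map_sum finite_top continuous_map_real_mult eval
        continuous_map_const[THEN iffD2]; simp)+
  have box: "compactin X (PiE Xd B)"
    unfolding X_def B_def by (subst compactin_PiE) auto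
  moreover have "Hausdorff_space X"
    unfolding X_def by (simp add: Hausdorff_space_product_topology)
  ultimately have "closedin X (PiE Xd B)"
    by (simp add: compactin_imp_closedin)
  moreover have "closedin X {h \<in> topspace X. pinner h (\<lambda>_. 1) \<in> {0}}"
    by (rule closedin_continuous_map_preimage[OF cont(1)]) simp
  moreover have "closedin X {h \<in> topspace X. pinner h h \<in> {1}}"
    by (rule closedin_continuous_map_preimage[OF cont(2)]) simp
  moreover have "unit_centered
      = PiE Xd B \<inter> {h \<in> topspace X. pinner h (\<lambda>_. 1) \<in> {0}} \<inter> {h \<in> topspace X. pinner h h \<in> {1}}"
    unfolding unit_centered_def B_def X_def by (auto simp: PiE_def Pi_def)
  ultimately have "closedin X unit_centered"
    by (simp add: closedin_Int)
  moreover have "unit_centered \<subseteq> PiE Xd B"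
    unfolding unit_centered_def B_def by auto
  ultimately have "compactin X unit_centered"
    using box closed_compactin by blast
  then show ?thesis
    using image_compactin cont(3) by (metis compactin_euclidean_iff)
qed

lemma dirichlet_attains_min_unit_centered:
  assumes h0: "pinner h0 (\<lambda>_. 1) = 0" "pinner h0 h0 = 1"
  obtains g where "pinner g (\<lambda>_. 1) = 0" "pinner g g = 1"
    "\<And>h. pinner h (\<lambda>_. 1) = 0 \<Longrightarrow> pinner h h = 1 \<Longrightarrow> dirichlet g \<le> dirichlet h"
proof -
  have "unit_centered \<noteq> {}" using restrict_mem_unit_centered[OF h0] by blast
  then obtain g where g: "g \<in> unit_centered" "\<And>k. k \<in> unit_centered \<Longrightarrow> dirichlet g \<le> dirichlet k"
    using compact_attains_inf[OF compact_dirichlet_unit_centered] by auto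
  show thesis
  proof (rule that)
    show "pinner g (\<lambda>_. 1) = 0" "pinner g g = 1" using g(1) unfolding unit_centered_def by auto
    fix h assume "pinner h (\<lambda>_. 1) = 0" "pinner h h = 1"
    then have "dirichlet g \<le> dirichlet (restrict h Xd)" using g(2) restrict_mem_unit_centered by blast
    also have "\<dots> = dirichlet h" by (rule dirichlet_cong) simp
    finally show "dirichlet g \<le> dirichlet h" .
  qed
qed

lemma dirichlet_minimizer_exists:
  assumes "pinner h0 (\<lambda>_. 1) = 0" "pinner h0 h0 = 1"
  obtains g where "pinner g (\<lambda>_. 1) = 0" "pinner g g = 1"
    "\<And>h. pinner h (\<lambda>_. 1) = 0 \<Longrightarrow> dirichlet g * pinner h h \<le> dirichlet h"
proof -
  obtain g where g: "pinner g (\<lambda>_. 1) = 0" "pinner g g = 1"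
    "\<And>h. pinner h (\<lambda>_. 1) = 0 \<Longrightarrow> pinner h h = 1 \<Longrightarrow> dirichlet g \<le> dirichlet h"
    using dirichlet_attains_min_unit_centered[OF assms] by blast
  have "dirichlet g * pinner h h \<le> dirichlet h" if h: "pinner h (\<lambda>_. 1) = 0" for h
  proof (cases "pinner h h = 0")
    case False
    then have pos: "pinner h h > 0" using pinner_self_nonneg[of h] by simp
    define c where "c = 1 / sqrt (pinner h h)"
    have c2: "c\<^sup>2 * pinner h h = 1" unfolding c_def using pos by (simp add: power_divide)
    have "pinner (\<lambda>t. c * h t) (\<lambda>_. 1) = 0"
      using pinner_scale[of c h 1 "\<lambda>_. 1"] h by simp
    moreover have "pinner (\<lambda>t. c * h t) (\<lambda>t. c * h t) = 1"
      using c2 by (simp add: pinner_scale power2_eq_square)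
    ultimately have "dirichlet g \<le> dirichlet (\<lambda>t. c * h t)"
      by (rule g(3))
    then have "dirichlet g \<le> c\<^sup>2 * dirichlet h"
      by (simp add: dirichlet_scale)
    then have "dirichlet g * pinner h h \<le> c\<^sup>2 * pinner h h * dirichlet h"
      using pos by (simp add: mult_right_mono mult.commute mult.left_commute)
    then show ?thesis using c2 by simp
  qed (simp add: dirichlet_nonneg)
  with g that show thesis by blast
qed

lemma enum_faces: "distinct (enum_faces Xd)" "set (enum_faces Xd) = Xd"
proof -
  have "\<exists>l. distinct l \<and> set l = Xd"
    using finite_distinct_list[OF finite_top] by blast
  then have "distinct (enum_faces Xd) \<and> set (enum_faces Xd) = Xd"
    unfolding enum_faces_def by (rule someI_ex)
  then show "distinct (enum_faces Xd)" "set (enum_faces Xd) = Xd" by auto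
qed

definition face_vec :: "('v set \<Rightarrow> real) \<Rightarrow> real vec" where
  "face_vec h = vec (length (enum_faces Xd)) (\<lambda>j. h (enum_faces Xd ! j))"

lemma enum_faces_nth_mem: "i < length (enum_faces Xd) \<Longrightarrow> enum_faces Xd ! i \<in> Xd"
  using nth_mem[of i "enum_faces Xd"] unfolding enum_faces(2) .

lemma down_up_mat_carrier:
  "down_up_mat Xd p d \<in> carrier_mat (length (enum_faces Xd)) (length (enum_faces Xd))"
  unfolding down_up_mat_def Let_def by simp

lemma down_up_mat_mult_face_vec:
  assumes i: "i < length (enum_faces Xd)"
  shows "(down_up_mat Xd p d *\<^sub>v face_vec h) $ i = down_up_apply h (enum_faces Xd ! i)"
proof -
  define l where "l = enum_faces Xd"
  have "(down_up_mat Xd p d *\<^sub>v face_vec h) $ i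
      = (\<Sum>j\<in>{0..<length l}. down_up Xd p d (l ! i) (l ! j) * h (l ! j))"
    using i unfolding down_up_mat_def face_vec_def l_def Let_def by (simp add: scalar_prod_def)
  also have "\<dots> = (\<Sum>s\<in>set l. down_up Xd p d (l ! i) s * h s)"
    using sum_nth_distinct[OF enum_faces(1), of "\<lambda>s. down_up Xd p d (l ! i) s * h s"] unfolding l_def .
  also have "\<dots> = down_up_apply h (l ! i)"
    unfolding down_up_apply_def l_def enum_faces(2) ..
  finally show ?thesis unfolding l_def .
qed

lemma down_up_mat_row_sum:
  assumes i: "i < length (enum_faces Xd)"
  shows "(\<Sum>j\<in>{0..<length (enum_faces Xd)}. down_up_mat Xd p d $$ (i, j)) = 1"
proof -
  have "(\<Sum>j\<in>{0..<length (enum_faces Xd)}. down_up_mat Xd p d $$ (i, j))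
      = (down_up_mat Xd p d *\<^sub>v face_vec (\<lambda>_. 1)) $ i"
    by (subst index_mult_mat_vec_sum[OF down_up_mat_carrier _ i]) (simp_all add: face_vec_def)
  also have "\<dots> = 1"
    unfolding down_up_mat_mult_face_vec[OF i] using down_up_apply_const enum_faces_nth_mem[OF i] .
  finally show ?thesis .
qed

lemma down_up_mat_eigen_face_vec:
  assumes ev: "\<And>s. s \<in> Xd \<Longrightarrow> down_up_apply g s = e * g s"
  shows "down_up_mat Xd p d *\<^sub>v face_vec g = e \<cdot>\<^sub>v face_vec g"
proof (rule eq_vecI)
  fix i assume "i < dim_vec (e \<cdot>\<^sub>v face_vec g)"
  then have i: "i < length (enum_faces Xd)" by (simp add: face_vec_def)
  then show "(down_up_mat Xd p d *\<^sub>v face_vec g) $ i = (e \<cdot>\<^sub>v face_vec g) $ i"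
    by (subst down_up_mat_mult_face_vec[OF i]) (simp add: ev enum_faces_nth_mem face_vec_def)
qed (use down_up_mat_carrier in \<open>simp add: face_vec_def\<close>)

lemma normalized_centered_nonconstant:
  assumes g1: "pinner g (\<lambda>_. 1) = 0" and g2: "pinner g g = 1"
  obtains s1 s2 where "s1 \<in> Xd" "s2 \<in> Xd" "g s1 \<noteq> g s2"
proof -
  obtain s0 where s0: "s0 \<in> Xd" using p_sum by fastforce
  have "\<exists>s\<in>Xd. g s \<noteq> g s0"
  proof (rule ccontr)
    assume "\<not> ?thesis"
    then have const: "\<And>s. s \<in> Xd \<Longrightarrow> g s = g s0" by blast
    have "pinner g (\<lambda>_. 1) = (\<Sum>t\<in>Xd. p t) * g s0"
      unfolding pinner_def sum_distrib_right by (intro sum.cong) (auto simp: const)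
    then have "g s0 = 0" using g1 p_sum by simp
    then have "pinner g g = 0" unfolding pinner_def by (intro sum.neutral) (auto simp: const)
    then show False using g2 by simp
  qed
  then show thesis using that s0 by blast
qed

lemma eigenfunction_eigenvalue_le:
  assumes g1: "pinner g (\<lambda>_. 1) = 0" and g2: "pinner g g = 1"
    and ev: "\<And>s. s \<in> Xd \<Longrightarrow> down_up_apply g s = e * g s"
    and gap: "lambda2_le (down_up_mat Xd p d) b" and b: "b < 1"
  shows "e \<le> b"
proof -
  obtain s1 s2 where s: "s1 \<in> Xd" "s2 \<in> Xd" "g s1 \<noteq> g s2"
    using normalized_centered_nonconstant[OF g1 g2] by blast
  obtain i0 where i0: "i0 < length (enum_faces Xd)" "enum_faces Xd ! i0 = s1"
    using s(1) enum_faces(2) by (metis in_set_conv_nth)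
  obtain j0 where j0: "j0 < length (enum_faces Xd)" "enum_faces Xd ! j0 = s2"
    using s(2) enum_faces(2) by (metis in_set_conv_nth)
  have "face_vec g \<in> carrier_vec (length (enum_faces Xd))" "face_vec g $ i0 \<noteq> face_vec g $ j0"
    using i0 j0 s(3) by (simp_all add: face_vec_def)
  then show ?thesis
    using lambda2_le_nonconstant_eigenvalue_le[OF down_up_mat_carrier down_up_mat_row_sum _
        down_up_mat_eigen_face_vec[OF ev] i0(1) j0(1) _ gap b] by blast
qed

lemma pinner_le_dirichlet:
  fixes C :: real
  assumes C: "C > 0" and gap: "lambda2_le (down_up_mat Xd p d) (1 - 1 / (C * real d))"
    and h: "pinner h (\<lambda>_. 1) = 0"
  shows "pinner h h \<le> C * real d * dirichlet h"
proof (cases "pinner h h = 0")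
  case True
  then show ?thesis using dirichlet_nonneg C by simp
next
  case False
  then have pos: "pinner h h > 0" using pinner_self_nonneg[of h] by simp
  define c where "c = 1 / sqrt (pinner h h)"
  have c2: "c * c * pinner h h = 1" unfolding c_def using pos by simp
  have "pinner (\<lambda>t. c * h t) (\<lambda>_. 1) = 0"
    using pinner_scale[of c h 1 "\<lambda>_. 1"] h by simp
  moreover have "pinner (\<lambda>t. c * h t) (\<lambda>t. c * h t) = 1"
    using c2 by (simp add: pinner_scale)
  ultimately obtain g where g: "pinner g (\<lambda>_. 1) = 0" "pinner g g = 1"
    "\<And>h. pinner h (\<lambda>_. 1) = 0 \<Longrightarrow> dirichlet g * pinner h h \<le> dirichlet h"
    using dirichlet_minimizer_exists by blast
  have Cd: "C * real d > 0" using C d_pos by simp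
  have "1 - dirichlet g \<le> 1 - 1 / (C * real d)"
    using eigenfunction_eigenvalue_le[OF g(1,2) dirichlet_minimizer_eigenfunction[OF g] gap] Cd by simp
  then have "pinner h h / (C * real d) \<le> dirichlet g * pinner h h"
    using pos by (simp add: divide_inverse mult_right_mono)
  also have "\<dots> \<le> dirichlet h" by (rule g(3)[OF h])
  finally show ?thesis using Cd by (simp add: field_simps)
qed

lemma spectral_poincare:
  fixes C :: real
  assumes C: "C > 0" and gap: "lambda2_le (down_up_mat Xd p d) (1 - 1 / (C * real d))"
  shows "(\<Sum>t\<in>Xd. p t * (g t - (\<Sum>t\<in>Xd. p t * g t))\<^sup>2)
       \<le> C * (\<Sum>t\<in>Xd. \<Sum>v\<in>t. p t * (g t - c (t - {v}))\<^sup>2)"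
proof -
  define m where "m = (\<Sum>t\<in>Xd. p t * g t)"
  define h where "h t = g t - m" for t
  have "pinner h (\<lambda>_. 1) = (\<Sum>t\<in>Xd. p t * g t) - m * (\<Sum>t\<in>Xd. p t)"
    unfolding pinner_def h_def by (simp add: algebra_simps sum_subtractf sum_distrib_left)
  then have centered: "pinner h (\<lambda>_. 1) = 0" unfolding m_def using p_sum by simp
  have "(\<Sum>t\<in>Xd. p t * (g t - m)\<^sup>2) = pinner h h"
    unfolding pinner_def h_def by (simp add: power2_eq_square mult.assoc)
  also have "\<dots> \<le> C * (real d * dirichlet h)"
    using pinner_le_dirichlet[OF C gap centered] by (simp add: mult.assoc)
  also have "\<dots> \<le> C * (\<Sum>t\<in>Xd. \<Sum>v\<in>t. p t * (h t - (c (t - {v}) - m))\<^sup>2)"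
    using C by (intro mult_left_mono dirichlet_le_sum_sq_facets) simp
  finally show ?thesis unfolding h_def m_def by simp
qed

section \<open>Links and the variance decomposition\<close>

definition link_mean :: "('v set \<Rightarrow> real) \<Rightarrow> 'v set \<Rightarrow> real" where
  "link_mean f s = (\<Sum>z\<in>\<Union>Xd. link_vertex_dist Xd p d s z * f (insert z s))"

definition link_energy :: "nat \<Rightarrow> ('v set \<Rightarrow> real) \<Rightarrow> real" where
  "link_energy k f = (\<Sum>t\<in>Xd. p t * (\<Sum>s\<in>k_subsets t (k - 1). \<Sum>w\<in>t - s. (f (insert w s) - link_mean f s)\<^sup>2))
     / real (d choose k)"

lemma finite_vertices: "finite (\<Union>Xd)"
  using finite_top top_faces by auto

lemma expec_eq_sum_top: "expec Xd p d k h = (\<Sum>t\<in>Xd. p t * (\<Sum>x\<in>k_subsets t k. h x)) / real (d choose k)"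
proof -
  have "expec Xd p d k h = (\<Sum>x\<in>faces Xd k. \<Sum>t\<in>Xd. if x \<subseteq> t then p t * h x else 0) / real (d choose k)"
    unfolding expec_def pi_face_def sum_divide_distrib
    by (intro sum.cong) (auto simp: sum_distrib_right intro!: sum.cong)
  also have "(\<Sum>x\<in>faces Xd k. \<Sum>t\<in>Xd. if x \<subseteq> t then p t * h x else 0) = (\<Sum>t\<in>Xd. p t * (\<Sum>x\<in>k_subsets t k. h x))"
    using sum_top_k_subsets[where X = "\<lambda>x t. p t * h x"] by (simp add: sum_distrib_left)
  finally show ?thesis .
qed

lemma expec_eq_k_mean: "expec Xd p d k f = (\<Sum>t\<in>Xd. p t * k_mean t k f)"
  unfolding expec_eq_sum_top sum_divide_distrib
  by (intro sum.cong refl) (simp add: k_mean_def card_k_subsets top_faces)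

lemma star_sum_eq:
  assumes t: "t \<in> Xd"
  shows "(if s \<subseteq> t then p t * (\<Sum>w\<in>t - s. \<Phi> w) else 0)
       = (\<Sum>w\<in>\<Union>Xd - s. if insert w s \<subseteq> t then p t * \<Phi> w else 0)"
proof (cases "s \<subseteq> t")
  case True
  have "t - s = (\<Union>Xd - s) \<inter> t" using t by auto
  then have "(\<Sum>w\<in>t - s. p t * \<Phi> w) = (\<Sum>w\<in>\<Union>Xd - s. if w \<in> t then p t * \<Phi> w else 0)"
    using finite_vertices by (simp add: sum.inter_restrict)
  then show ?thesis using True by (simp add: sum_distrib_left)
qed (auto intro!: sum.neutral)

lemma sum_top_stars:
  "(\<Sum>t\<in>Xd. p t * (\<Sum>s\<in>k_subsets t j. \<Sum>w\<in>t - s. \<Phi> s w))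
     = (\<Sum>s\<in>faces Xd j. \<Sum>w\<in>\<Union>Xd - s. weight (insert w s) * \<Phi> s w)"
proof -
  have "(\<Sum>t\<in>Xd. p t * (\<Sum>s\<in>k_subsets t j. \<Sum>w\<in>t - s. \<Phi> s w))
      = (\<Sum>s\<in>faces Xd j. \<Sum>t\<in>Xd. if s \<subseteq> t then p t * (\<Sum>w\<in>t - s. \<Phi> s w) else 0)"
    using sum_top_k_subsets[where X = "\<lambda>s t. p t * (\<Sum>w\<in>t - s. \<Phi> s w)"] by (simp add: sum_distrib_left)
  also have "\<dots> = (\<Sum>s\<in>faces Xd j. \<Sum>t\<in>Xd. \<Sum>w\<in>\<Union>Xd - s. if insert w s \<subseteq> t then p t * \<Phi> s w else 0)"
    by (intro sum.cong refl star_sum_eq)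
  also have "\<dots> = (\<Sum>s\<in>faces Xd j. \<Sum>w\<in>\<Union>Xd - s. \<Sum>t\<in>Xd. if insert w s \<subseteq> t then p t * \<Phi> s w else 0)"
    by (intro sum.cong refl sum.swap)
  also have "\<dots> = (\<Sum>s\<in>faces Xd j. \<Sum>w\<in>\<Union>Xd - s. weight (insert w s) * \<Phi> s w)"
    unfolding weight_def sum_distrib_right by (intro sum.cong refl) auto
  finally show ?thesis .
qed

lemma sum_weight_insert:
  assumes s: "s \<in> faces Xd j"
  shows "(\<Sum>w\<in>\<Union>Xd - s. weight (insert w s)) = weight s * real (d - j)"
proof -
  have "(\<Sum>w\<in>\<Union>Xd - s. weight (insert w s))
      = (\<Sum>t\<in>Xd. \<Sum>w\<in>\<Union>Xd - s. if insert w s \<subseteq> t then p t * 1 else 0)"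
    unfolding weight_def by (subst sum.swap) (intro sum.cong refl; simp)
  also have "\<dots> = (\<Sum>t\<in>Xd. if s \<subseteq> t then p t * (\<Sum>w\<in>t - s. 1) else 0)"
    by (intro sum.cong refl star_sum_eq[symmetric])
  also have "\<dots> = (\<Sum>t\<in>Xd. if s \<subseteq> t then p t * real (d - j) else 0)"
    using s top_faces unfolding faces_def by (intro sum.cong refl) (auto simp: card_Diff_subset finite_subset)
  also have "\<dots> = weight s * real (d - j)"
    unfolding weight_def sum_distrib_right by (intro sum.cong) auto
  finally show ?thesis .
qed

lemma sum_link_vertex_dist:
  assumes s: "s \<in> faces Xd j"
  shows "(\<Sum>z\<in>\<Union>Xd. link_vertex_dist Xd p d s z * G z)
       = (\<Sum>z\<in>\<Union>Xd - s. weight (insert z s) / (\<Sum>w\<in>\<Union>Xd - s. weight (insert w s)) * G z)"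
proof -
  have card_s: "card s = j" using s unfolding faces_def by auto
  define X where "X z = weight (insert z s) / (\<Sum>w\<in>\<Union>Xd - s. weight (insert w s))" for z
  have "link_vertex_dist Xd p d s z = (if z \<in> s then 0 else weight (insert z s) / (weight s * real (d - card s)))" for z
    unfolding link_vertex_dist_def weight_def by simp
  then have "(\<Sum>z\<in>\<Union>Xd. link_vertex_dist Xd p d s z * G z) = (\<Sum>z\<in>\<Union>Xd. if z \<in> - s then X z * G z else 0)"
    unfolding X_def card_s sum_weight_insert[OF s] by (intro sum.cong) auto
  also have "\<dots> = (\<Sum>z\<in>\<Union>Xd - s. X z * G z)"
    using finite_vertices by (simp add: sum.inter_restrict Diff_eq)
  finally show ?thesis unfolding X_def .
qed

lemma expec_pos_part_eq_link_energy:
  assumes k: "1 \<le> k" "k \<le> d"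
  shows "expec Xd p d k (\<lambda>x. \<Sum>v\<in>x. \<Sum>z\<in>\<Union>Xd.
           link_vertex_dist Xd p d (x - {v}) z * (max (f x - f (insert z (x - {v}))) 0)\<^sup>2)
       = link_energy k f"
proof -
  define Y where "Y s w = (\<Sum>z\<in>\<Union>Xd. link_vertex_dist Xd p d s z * (max (f (insert w s) - f (insert z s)) 0)\<^sup>2)"
    for s w
  define Z where "Z s w = (f (insert w s) - link_mean f s)\<^sup>2" for s w
  have flags: "(\<Sum>x\<in>k_subsets t k. \<Sum>v\<in>x. \<Sum>z\<in>\<Union>Xd.
          link_vertex_dist Xd p d (x - {v}) z * (max (f x - f (insert z (x - {v}))) 0)\<^sup>2)
      = (\<Sum>s\<in>k_subsets t (k - 1). \<Sum>w\<in>t - s. Y s w)" if t: "t \<in> Xd" for t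
    unfolding Y_def using top_faces[OF t] k by (intro sum_k_subsets_flags) auto
  have star: "(\<Sum>w\<in>\<Union>Xd - s. weight (insert w s) * Y s w) = (\<Sum>w\<in>\<Union>Xd - s. weight (insert w s) * Z s w)"
    if s: "s \<in> faces Xd (k - 1)" for s
  proof -
    have "(\<Sum>w\<in>\<Union>Xd - s. weight (insert w s)) > 0"
      using sum_weight_insert[OF s] weight_pos[OF s] k by simp
    then show ?thesis
      unfolding Y_def Z_def link_mean_def sum_link_vertex_dist[OF s]
      by (intro weighted_pos_part_sq_eq_variance) simp
  qed
  have "(\<Sum>t\<in>Xd. p t * (\<Sum>s\<in>k_subsets t (k - 1). \<Sum>w\<in>t - s. Y s w))
      = (\<Sum>t\<in>Xd. p t * (\<Sum>s\<in>k_subsets t (k - 1). \<Sum>w\<in>t - s. Z s w))"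
    unfolding sum_top_stars by (intro sum.cong refl star)
  then show ?thesis
    unfolding expec_eq_sum_top link_energy_def Z_def by (simp add: flags)
qed

lemma var_eq_within_plus_between:
  assumes k: "k \<le> d"
  shows "var Xd p d k f
       = (\<Sum>t\<in>Xd. p t * (\<Sum>x\<in>k_subsets t k. (f x - k_mean t k f)\<^sup>2)) / real (d choose k)
         + (\<Sum>t\<in>Xd. p t * (k_mean t k f - expec Xd p d k f)\<^sup>2)"
proof -
  define \<mu> where "\<mu> = expec Xd p d k f"
  have "p t * (\<Sum>x\<in>k_subsets t k. (f x - \<mu>)\<^sup>2) / real (d choose k)
      = p t * (\<Sum>x\<in>k_subsets t k. (f x - k_mean t k f)\<^sup>2) / real (d choose k) + p t * (k_mean t k f - \<mu>)\<^sup>2"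
    if t: "t \<in> Xd" for t
  proof -
    have card: "card (k_subsets t k) = d choose k" and "real (d choose k) > 0"
      using top_faces[OF t] k by (simp_all add: card_k_subsets)
    then show ?thesis
      using sum_sq_dev_eq[of "k_subsets t k" f \<mu>] top_faces[OF t]
      unfolding k_mean_def card by (simp add: field_simps)
  qed
  then show ?thesis
    unfolding var_def \<mu>_def[symmetric] expec_eq_sum_top[of _ "\<lambda>x. (f x - \<mu>)\<^sup>2"] sum_divide_distrib
    by (simp add: sum.distrib)
qed

lemma within_variance_le_link_energy:
  assumes k: "k \<le> d"
  shows "(\<Sum>t\<in>Xd. p t * (\<Sum>x\<in>k_subsets t k. (f x - k_mean t k f)\<^sup>2)) / real (d choose k) \<le> link_energy k f"
  unfolding link_energy_def
proof (intro divide_right_mono sum_mono mult_left_mono)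
  fix t assume t: "t \<in> Xd"
  then have "(\<Sum>x\<in>k_subsets t k. (f x - k_mean t k f)\<^sup>2) \<le> up_energy t k f"
    using top_faces[OF t] k by (intro k_subsets_variance_le_up_energy) auto
  also have "\<dots> \<le> (\<Sum>s\<in>k_subsets t (k - 1). \<Sum>w\<in>t - s. (f (insert w s) - link_mean f s)\<^sup>2)"
    using top_faces[OF t] by (intro up_energy_le) auto
  finally show "(\<Sum>x\<in>k_subsets t k. (f x - k_mean t k f)\<^sup>2)
      \<le> (\<Sum>s\<in>k_subsets t (k - 1). \<Sum>w\<in>t - s. (f (insert w s) - link_mean f s)\<^sup>2)" .
qed (auto intro: p_nonneg)

lemma k_mean_facet_sq_le:
  assumes k: "1 \<le> k" "k \<le> d" and t: "t \<in> Xd" and v: "v \<in> t"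
  shows "(k_mean t k f - ((\<Sum>x\<in>k_subsets (t - {v}) k. f x) + (\<Sum>s\<in>k_subsets (t - {v}) (k - 1). link_mean f s))
            / real (d choose k))\<^sup>2
       \<le> (\<Sum>s\<in>k_subsets (t - {v}) (k - 1). (f (insert v s) - link_mean f s)\<^sup>2) / real (d choose k)"
proof -
  define S where "S = k_subsets (t - {v}) (k - 1)"
  define Ck where "Ck = real (d choose k)"
  have t_fin: "finite t" "card t = d" using top_faces[OF t] by auto
  have Ck: "Ck > 0" unfolding Ck_def using k by simp
  have "card S = (d - 1) choose (k - 1)"
    unfolding S_def using card_k_subsets[of "t - {v}" "k - 1"] t_fin v by simp
  also have "\<dots> \<le> d choose k"
    using k by (cases d; cases k) auto
  finally have card_S: "real (card S) \<le> Ck" unfolding Ck_def by simp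
  have "k_mean t k f = (\<Sum>x\<in>k_subsets t k. f x) / Ck"
    unfolding k_mean_def Ck_def using t_fin by (simp add: card_k_subsets)
  then have "k_mean t k f - ((\<Sum>x\<in>k_subsets (t - {v}) k. f x) + (\<Sum>s\<in>S. link_mean f s)) / Ck
      = (\<Sum>s\<in>S. f (insert v s) - link_mean f s) / Ck"
    unfolding S_def sum_k_subsets_split[OF t_fin(1) v k(1)]
    by (simp add: sum_subtractf diff_divide_distrib add_divide_distrib)
  then have "(k_mean t k f - ((\<Sum>x\<in>k_subsets (t - {v}) k. f x) + (\<Sum>s\<in>S. link_mean f s)) / Ck)\<^sup>2
      = (\<Sum>s\<in>S. f (insert v s) - link_mean f s)\<^sup>2 / Ck\<^sup>2"
    by (simp add: power_divide)
  also have "\<dots> \<le> (card S * (\<Sum>s\<in>S. (f (insert v s) - link_mean f s)\<^sup>2)) / Ck\<^sup>2"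
    by (intro divide_right_mono sum_sq_le_card_sum_sq) simp
  also have "\<dots> \<le> (Ck * (\<Sum>s\<in>S. (f (insert v s) - link_mean f s)\<^sup>2)) / Ck\<^sup>2"
    by (intro divide_right_mono mult_right_mono card_S sum_nonneg) auto
  also have "\<dots> = (\<Sum>s\<in>S. (f (insert v s) - link_mean f s)\<^sup>2) / Ck"
    using Ck by (simp add: power2_eq_square)
  finally show ?thesis unfolding S_def Ck_def .
qed

lemma between_variance_le_link_energy:
  assumes k: "1 \<le> k" "k \<le> d" and C: "C > 0"
    and gap: "lambda2_le (down_up_mat Xd p d) (1 - 1 / (C * real d))"
  shows "(\<Sum>t\<in>Xd. p t * (k_mean t k f - expec Xd p d k f)\<^sup>2) \<le> C * link_energy k f"
proof -
  \<comment> \<open>On t - {v}, c keeps the k-subsets avoiding v and replaces those through v by link means,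
    so that its distance to the k-mean on t is controlled by the link variances.\<close>
  define c where "c u = ((\<Sum>x\<in>k_subsets u k. f x) + (\<Sum>s\<in>k_subsets u (k - 1). link_mean f s)) / real (d choose k)"
    for u
  have "(\<Sum>t\<in>Xd. p t * (k_mean t k f - expec Xd p d k f)\<^sup>2)
      \<le> C * (\<Sum>t\<in>Xd. \<Sum>v\<in>t. p t * (k_mean t k f - c (t - {v}))\<^sup>2)"
    unfolding expec_eq_k_mean by (rule spectral_poincare[OF C gap])
  also have "(\<Sum>t\<in>Xd. \<Sum>v\<in>t. p t * (k_mean t k f - c (t - {v}))\<^sup>2) \<le> link_energy k f"
    unfolding link_energy_def sum_divide_distrib
  proof (rule sum_mono)
    fix t assume t: "t \<in> Xd"
    have "(\<Sum>v\<in>t. p t * (k_mean t k f - c (t - {v}))\<^sup>2)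
        \<le> (\<Sum>v\<in>t. p t * ((\<Sum>s\<in>k_subsets (t - {v}) (k - 1). (f (insert v s) - link_mean f s)\<^sup>2) / real (d choose k)))"
      unfolding c_def using k t p_nonneg[OF t] by (intro sum_mono mult_left_mono k_mean_facet_sq_le) auto
    also have "\<dots> = p t * (\<Sum>s\<in>k_subsets t (k - 1). \<Sum>w\<in>t - s. (f (insert w s) - link_mean f s)\<^sup>2) / real (d choose k)"
      using top_faces[OF t]
      by (simp add: sum_points_k_subsets_swap sum_distrib_left sum_divide_distrib[symmetric])
    finally show "(\<Sum>v\<in>t. p t * (k_mean t k f - c (t - {v}))\<^sup>2)
        \<le> p t * (\<Sum>s\<in>k_subsets t (k - 1). \<Sum>w\<in>t - s. (f (insert w s) - link_mean f s)\<^sup>2) / real (d choose k)" .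
  qed
  then have "C * (\<Sum>t\<in>Xd. \<Sum>v\<in>t. p t * (k_mean t k f - c (t - {v}))\<^sup>2) \<le> C * link_energy k f"
    using C by simp
  finally show ?thesis .
qed

lemma var_le_link_energy:
  assumes k: "1 \<le> k" "k \<le> d" and C: "C > 0"
    and gap: "lambda2_le (down_up_mat Xd p d) (1 - 1 / (C * real d))"
  shows "var Xd p d k f \<le> (C + 1) * link_energy k f"
  using var_eq_within_plus_between[OF k(2), of f] within_variance_le_link_energy[OF k(2), of f]
    between_variance_le_link_energy[OF k C gap, of f]
  by (simp add: algebra_simps)

lemma var_0: "var Xd p d 0 f = 0"
proof -
  have "expec Xd p d 0 h = h {}" for h
    unfolding expec_eq_sum_top using top_faces p_sum by (simp add: k_subsets_0 sum_distrib_right[symmetric])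
  then show ?thesis unfolding var_def by simp
qed

end

theorem mainTheorem12:
  fixes Xd :: "'v set set" and p :: "'v set \<Rightarrow> real" and d :: nat and C :: real
  assumes fin: "finite Xd" and ne: "Xd \<noteq> {}"
    and unif: "\<forall>s\<in>Xd. finite s \<and> card s = d" and d_pos: "d \<ge> 1"
    and p_pos: "\<forall>s\<in>Xd. p s > 0" and p_sum: "(\<Sum>s\<in>Xd. p s) = 1"
    and C_pos: "C > 0"
    and gap: "lambda2_le (down_up_mat Xd p d) (1 - 1 / (C * real d))"
  shows "\<forall>k \<le> d. \<forall>f :: 'v set \<Rightarrow> real.
     var Xd p d k f \<le> (C + 1) *
       expec Xd p d k (\<lambda>x. \<Sum>v\<in>x. \<Sum>z\<in>\<Union>Xd.
          link_vertex_dist Xd p d (x - {v}) z *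
          (max (f x - f (insert z (x - {v}))) 0)\<^sup>2)"
proof (intro allI impI)
  fix k f assume k: "k \<le> d"
  interpret weighted_complex Xd p d
    using fin unif d_pos p_pos p_sum by unfold_locales auto
  show "var Xd p d k f \<le> (C + 1) * expec Xd p d k (\<lambda>x. \<Sum>v\<in>x. \<Sum>z\<in>\<Union>Xd.
          link_vertex_dist Xd p d (x - {v}) z * (max (f x - f (insert z (x - {v}))) 0)\<^sup>2)"
  proof (cases "k = 0")
    case True
    then show ?thesis by (simp add: var_0 expec_eq_sum_top k_subsets_0 top_faces)
  next
    case False
    then show ?thesis
      using var_le_link_energy[OF _ k C_pos gap] expec_pos_part_eq_link_energy[OF _ k] by simp
  qed
qed

end
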